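(* Assume (A1)–(A4), bandwidths $\boldsymbol h=\boldsymbol h(\alpha,\nu)$ (i.e. $h_{ij}=\alpha n_i^{-\nu}$), and weights $\boldsymbol\omega=\boldsymbol\omega^*(\boldsymbol\tau(\bar\tau^* ),\boldsymbol h(\alpha,\nu))$ or $\boldsymbol\omega=\boldsymbol\omega^*(\boldsymbol\tau(\bar\tau^{**}),\boldsymbol h(\alpha,\nu))$. Then for $x\in[0,1]$: if $11/15\le s\le1$, $\mathrm{AMSE}(\widehat m(x))=O(n^{-4s\nu}+n^{s\nu-1})$; if $2/3<s\le 11/15$, $\mathrm{AMSE}(\widehat m(x))=O(n^{-4s\nu})$. In particular, if $11/15\le s\le1$ and $\nu=\nu^*:=\frac{\ln n}{5(\ln n-\ln m)}$, then $\mathrm{AMSE}(\widehat m(x))=O(n^{-4/5})$ for $x\in[0,1]$.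
   Context: Setting: model $Y=m(X)+\sigma(X)\varepsilon$, $X\in[0,1]$, $\varepsilon$ independent of $X$ with mean 0, variance 1, PDF $f_\varepsilon$, CDF $F_\varepsilon$; data split into $m$ batches of sizes $n_i$, $n=\sum n_i$; global estimator $\widehat m(x)=\sum_{i=1}^m\sum_{j=1}^J\omega_{ij}\widehat m_i(x;\tau_{ij},h_{ij})$, $\widehat m_i(x;\tau,h)$ the local linear quantile estimator from batch $i$ (intercept minimizing $\sum_k\rho_\tau(Y_{ik}-a-b(X_{ik}-x))K_h(X_{ik}-x)$, $\rho_\tau(u)=(\tau-I(u<0))u$, $K_h=K(\cdot/h)/h$). Stacked vectors $\boldsymbol\omega,\boldsymbol\tau,\boldsymbol h\in\mathbb R^{mJ}$, $\mathbf 1_d$ all-ones vector, $\boldsymbol F_\varepsilon^{-1}(\boldsymbol\tau)=(F_\varepsilon^{-1}(\tau_{ij}))$. Notation: $\mu_2=\int v^2K$; $\beta(x,\tau)=\frac{\mu_2}{2}(m''(x)+\sigma''(x)F_\varepsilon^{-1}(\tau))$; $a(x)=\sigma^2(x)\int K^2/f_X(x)$; $\mathcal R(\boldsymbol h_i,\boldsymbol\tau_i)$ the $J\times J$ matrix with entries $\frac{\tau_{ij}\wedge\tau_{ij'}-\tau_{ij}\tau_{ij'}}{\sqrt{h_{ij}h_{ij'}}f_\varepsilon(F_\varepsilon^{-1}(\tau_{ij}))f_\varepsilon(F_\varepsilon^{-1}(\tau_{ij'}))}$; $\mathcal R_1(\boldsymbol\tau_i)=\mathcal R(\mathbf 1_J,\boldsymbol\tau_i)$;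 $\boldsymbol S=\mathrm{diag}(n_i^{-1}\mathcal R(\boldsymbol h_i,\boldsymbol\tau_i))_{i=1}^m$; $\mathrm{AMSE}(\widehat m(x))=B^2+\Sigma$ with $B=\sum_{i,j}\omega_{ij}h_{ij}^2\beta(x,\tau_{ij})$ and $\Sigma=a(x)\boldsymbol\omega^\top\boldsymbol S\boldsymbol\omega$. Optimal weights $\boldsymbol\omega^*(\boldsymbol\tau,\boldsymbol h)=\frac{c_1\boldsymbol d_1-c_2\boldsymbol d_2}{c_1c_3-c_2^2}$, $\boldsymbol d_1=\boldsymbol S^{-1}\mathbf 1_{mJ}$, $\boldsymbol d_2=\boldsymbol S^{-1}\boldsymbol F_\varepsilon^{-1}(\boldsymbol\tau)$, $c_1=\boldsymbol d_2^\top\boldsymbol F_\varepsilon^{-1}(\boldsymbol\tau)$, $c_2=\boldsymbol d_2^\top\mathbf 1_{mJ}$, $c_3=\boldsymbol d_1^\top\mathbf 1_{mJ}$. Quantile levels $\boldsymbol\tau(\bar\tau)$ with entries $\bar\tau+\big(\frac{i+mj-m}{mJ}-\frac12(1+\frac1{mJ})\big)d_\tau$, $(\bar\tau-d_\tau/2,\bar\tau+d_\tau/2)\subset(\delta_\tau,1-\delta_\tau)$; $\bar\tau^*$ solves $\mathbf 1_{mJ}^\top\boldsymbol F_\varepsilon^{-1}(\boldsymbol\tau(\bar\tau^* ))=0$; $\bar\tau^{**}$ solves $\mathbf 1_{mJ}^\top\boldsymbol S^{-1}(\boldsymbol\tau(\bar\tau^{**}),\boldsymbol h(1,\nu))\boldsymbol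 F_\varepsilon^{-1}(\boldsymbol\tau(\bar\tau^{**}))=0$. Assumptions. (A1) On an open $I_x\subseteq[0,1]$: $f_X,\sigma>0$; $f_X'',m'',\sigma''$ exist and continuous; $f_\varepsilon>0$ with $f'_\varepsilon$ continuous, bounded. (A2) $K$ Lipschitz, nonnegative, compactly supported, $\int K=1$, $\int uK=0$, $\int u^2K<\infty$, $\int K^2<\infty$, $K\ge\delta_K>0$ on some $[-s_K,s_K]$. (A3) $\sum\omega_{ij}=1$, $\sum\omega_{ij}F_\varepsilon^{-1}(\tau_{ij})=0$; constants $M_w>0$, $\delta_\tau\in(0,1/2)$, $0<\lambda_{\min}<\lambda_{\max}<\infty$ independent of $n,m$ with $\|\boldsymbol\omega\|_\infty<M_w$, $\delta_\tau<\tau_{ij}<1-\delta_\tau$, eigenvalues of each $\mathcal R_1(\boldsymbol\tau_i)$ in $(\lambda_{\min},\lambda_{\max})$. (A4) Constants $M_b>0$, $s\in(2/3,1]$ with $M_b^{-2}n^s<n_i<M_b^2n^s$; $h_{ij}=\Omega(n^{-s\nu})$ with $0<\nu<3-2/s$; $a_n=\Omega(b_n)$ means $a_n=O(b_n)$ and $b_n=O(a_n)$. *)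

theory Defs
  imports "HOL-Analysis.Analysis" "HOL-Library.Landau_Symbols"
    "Jordan_Normal_Form.Gauss_Jordan_Elimination" "Jordan_Normal_Form.Char_Poly"
begin

definition qinv :: "(real \<Rightarrow> real) \<Rightarrow> real \<Rightarrow> real" where
  "qinv F t = (THE q. F q = t)"

definition C2_on :: "real set \<Rightarrow> (real \<Rightarrow> real) \<Rightarrow> bool" where
  "C2_on I g \<longleftrightarrow> (\<forall>y\<in>I. g differentiable (at y) \<and> deriv g differentiable (at y))
                 \<and> continuous_on I (deriv (deriv g))"

text \<open>Quantile levels tau(taubar): entry (i,j), 1 <= i <= m, 1 <= j <= J.\<close>
definition tau_lev :: "nat \<Rightarrow> nat \<Rightarrow> real \<Rightarrow> real \<Rightarrow> nat \<Rightarrow> nat \<Rightarrow> real" where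
  "tau_lev m J dtau tbar i j =
     tbar + (real (i + m * j - m) / real (m * J) - (1 + 1 / real (m * J)) / 2) * dtau"

definition bw :: "real \<Rightarrow> real \<Rightarrow> (nat \<Rightarrow> nat) \<Rightarrow> nat \<Rightarrow> nat \<Rightarrow> real" where
  "bw alpha nu nb i j = alpha * real (nb i) powr (- nu)"

definition stack :: "nat \<Rightarrow> nat \<Rightarrow> (nat \<Rightarrow> nat \<Rightarrow> real) \<Rightarrow> real Matrix.vec" where
  "stack m J g = Matrix.vec (m * J) (\<lambda>p. g (p div J + 1) (p mod J + 1))"

definition ones :: "nat \<Rightarrow> real Matrix.vec" where
  "ones d = Matrix.vec d (\<lambda>_. 1)"

definition Rent :: "(real \<Rightarrow> real) \<Rightarrow> (real \<Rightarrow> real) \<Rightarrow> real \<Rightarrow> real \<Rightarrow> real \<Rightarrow> real \<Rightarrow> real" where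
  "Rent fe Finv h h' t t' = (min t t' - t * t') / (sqrt (h * h') * fe (Finv t) * fe (Finv t'))"

definition Rmat :: "(real \<Rightarrow> real) \<Rightarrow> (real \<Rightarrow> real) \<Rightarrow> nat \<Rightarrow> (nat \<Rightarrow> nat \<Rightarrow> real)
                    \<Rightarrow> (nat \<Rightarrow> nat \<Rightarrow> real) \<Rightarrow> nat \<Rightarrow> real mat" where
  "Rmat fe Finv J h tau i =
     mat J J (\<lambda>(j, j'). Rent fe Finv (h i (j + 1)) (h i (j' + 1)) (tau i (j + 1)) (tau i (j' + 1)))"

definition R1mat :: "(real \<Rightarrow> real) \<Rightarrow> (real \<Rightarrow> real) \<Rightarrow> nat \<Rightarrow> (nat \<Rightarrow> nat \<Rightarrow> real) \<Rightarrow> nat \<Rightarrow> real mat" where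
  "R1mat fe Finv J tau i = Rmat fe Finv J (\<lambda>_ _. 1) tau i"

text \<open>S = diag(n_i^{-1} R(h_i,tau_i)), i = 1..m, an mJ x mJ block-diagonal matrix.\<close>
definition Smat :: "(real \<Rightarrow> real) \<Rightarrow> (real \<Rightarrow> real) \<Rightarrow> nat \<Rightarrow> nat \<Rightarrow> (nat \<Rightarrow> nat)
                    \<Rightarrow> (nat \<Rightarrow> nat \<Rightarrow> real) \<Rightarrow> (nat \<Rightarrow> nat \<Rightarrow> real) \<Rightarrow> real mat" where
  "Smat fe Finv m J nb h tau =
     mat (m * J) (m * J) (\<lambda>(p, q).
       if p div J = q div J
       then (Rmat fe Finv J h tau (p div J + 1)) $$ (p mod J, q mod J) / real (nb (p div J + 1))
       else 0)"

definition Sinv :: "(real \<Rightarrow> real) \<Rightarrow> (real \<Rightarrow> real) \<Rightarrow> nat \<Rightarrow> nat \<Rightarrow> (nat \<Rightarrow> nat)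
                    \<Rightarrow> (nat \<Rightarrow> nat \<Rightarrow> real) \<Rightarrow> (nat \<Rightarrow> nat \<Rightarrow> real) \<Rightarrow> real mat" where
  "Sinv fe Finv m J nb h tau = the (mat_inverse (Smat fe Finv m J nb h tau))"

definition Fvec :: "(real \<Rightarrow> real) \<Rightarrow> nat \<Rightarrow> nat \<Rightarrow> (nat \<Rightarrow> nat \<Rightarrow> real) \<Rightarrow> real Matrix.vec" where
  "Fvec Finv m J tau = stack m J (\<lambda>i j. Finv (tau i j))"

definition opt_weights :: "(real \<Rightarrow> real) \<Rightarrow> (real \<Rightarrow> real) \<Rightarrow> nat \<Rightarrow> nat \<Rightarrow> (nat \<Rightarrow> nat)
                    \<Rightarrow> (nat \<Rightarrow> nat \<Rightarrow> real) \<Rightarrow> (nat \<Rightarrow> nat \<Rightarrow> real) \<Rightarrow> real Matrix.vec" where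
  "opt_weights fe Finv m J nb h tau =
     (let Si = Sinv fe Finv m J nb h tau;
          F = Fvec Finv m J tau;
          d1 = Si *\<^sub>v ones (m * J);
          d2 = Si *\<^sub>v F;
          c1 = scalar_prod d2 F;
          c2 = scalar_prod d2 (ones (m * J));
          c3 = scalar_prod d1 (ones (m * J))
      in (1 / (c1 * c3 - c2\<^sup>2)) \<cdot>\<^sub>v (c1 \<cdot>\<^sub>v d1 - c2 \<cdot>\<^sub>v d2))"

definition mu2 :: "(real \<Rightarrow> real) \<Rightarrow> real" where
  "mu2 K = (LINT v|lborel. v\<^sup>2 * K v)"

definition beta :: "(real \<Rightarrow> real) \<Rightarrow> (real \<Rightarrow> real) \<Rightarrow> (real \<Rightarrow> real) \<Rightarrow> (real \<Rightarrow> real)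
                    \<Rightarrow> real \<Rightarrow> real \<Rightarrow> real" where
  "beta K mreg sig Finv x t = mu2 K / 2 * (deriv (deriv mreg) x + deriv (deriv sig) x * Finv t)"

definition avar :: "(real \<Rightarrow> real) \<Rightarrow> (real \<Rightarrow> real) \<Rightarrow> (real \<Rightarrow> real) \<Rightarrow> real \<Rightarrow> real" where
  "avar K sig fX x = (sig x)\<^sup>2 * (LINT v|lborel. (K v)\<^sup>2) / fX x"

definition amse :: "(real \<Rightarrow> real) \<Rightarrow> (real \<Rightarrow> real) \<Rightarrow> (real \<Rightarrow> real) \<Rightarrow> (real \<Rightarrow> real)
                    \<Rightarrow> (real \<Rightarrow> real) \<Rightarrow> (real \<Rightarrow> real) \<Rightarrow> real \<Rightarrow> nat \<Rightarrow> nat \<Rightarrow> (nat \<Rightarrow> nat)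
                    \<Rightarrow> (nat \<Rightarrow> nat \<Rightarrow> real) \<Rightarrow> (nat \<Rightarrow> nat \<Rightarrow> real) \<Rightarrow> real Matrix.vec \<Rightarrow> real" where
  "amse K mreg sig fX fe Finv x m J nb h tau w =
     (let hv = stack m J h; tv = stack m J tau;
          B = (\<Sum>p<m * J. w $ p * (hv $ p)\<^sup>2 * beta K mreg sig Finv x (tv $ p));
          Sig = avar K sig fX x * scalar_prod w (Smat fe Finv m J nb h tau *\<^sub>v w)
      in B\<^sup>2 + Sig)"

end

theory Submission
  imports Defs
begin

text \<open>The matrix S is block diagonal with blocks
  (n_i h_i)^(-1) R_1(tau_i), so by the eigenvalue bounds of (A3) its quadratic form is comparable
  to the Euclidean norm with constants of order n^(-s(1 - nu)). The optimal weights satisfy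
  S w \<in> span {1, F^(-1)(tau)}, and either choice of the centring level makes w at least as good
  as the uniform weights 1/(mJ); since m is of order n^(1 - s) this bounds the variance term by
  O(n^(s nu - 1)). The same estimate controls |w|^2, and with Cauchy-Schwarz and the boundedness
  of F^(-1) on (delta, 1 - delta) (Chebyshev) the bias is O(h^2) = O(n^(-2 s nu)). For s \<le> 11/15
  the constraint nu < 3 - 2/s makes the variance term the smaller one, and for nu = nu^* both
  terms are O(n^(-4/5)).\<close>

section \<open>Quadratic forms and eigenvalue bounds\<close>

definition bilin :: "nat \<Rightarrow> (nat \<Rightarrow> nat \<Rightarrow> real) \<Rightarrow> (nat \<Rightarrow> real) \<Rightarrow> (nat \<Rightarrow> real) \<Rightarrow> real" where
  "bilin N A x y = (\<Sum>i<N. \<Sum>j<N. A i j * x i * y j)"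

definition sqnorm :: "nat \<Rightarrow> (nat \<Rightarrow> real) \<Rightarrow> real" where
  "sqnorm N x = (\<Sum>i<N. (x i)\<^sup>2)"

lemma sqnorm_nonneg: "0 \<le> sqnorm N x"
  unfolding sqnorm_def by (simp add: sum_nonneg)

lemma sqnorm_eq_0_iff: "sqnorm N x = 0 \<longleftrightarrow> (\<forall>i<N. x i = 0)"
  unfolding sqnorm_def by (subst sum_nonneg_eq_0_iff) auto

lemma bilin_add_scaled:
  "bilin N A (\<lambda>i. u i + t * g i) (\<lambda>i. u i + t * g i)
     = bilin N A u u + t * bilin N A u g + t * bilin N A g u + t\<^sup>2 * bilin N A g g"
  unfolding bilin_def
  by (simp add: algebra_simps power2_eq_square sum.distrib sum_distrib_left)

lemma sqnorm_add_scaled: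
  "sqnorm N (\<lambda>i. u i + t * g i) = sqnorm N u + 2 * t * (\<Sum>i<N. u i * g i) + t\<^sup>2 * sqnorm N g"
  unfolding sqnorm_def
  by (simp add: algebra_simps power2_eq_square sum.distrib sum_distrib_left)

lemma bilin_commute: "(\<And>i j. A i j = A j i) \<Longrightarrow> bilin N A u g = bilin N A g u"
  unfolding bilin_def
  by (subst sum.swap) (simp add: mult.commute mult.left_commute)

lemma bilin_eq_sum_rows: "bilin N A g u = (\<Sum>i<N. g i * (\<Sum>j<N. A i j * u j))"
  unfolding bilin_def by (simp add: sum_distrib_left algebra_simps)

lemma bilin_cong:
  "(\<And>i j. i < N \<Longrightarrow> j < N \<Longrightarrow> A i j = B i j) \<Longrightarrow> bilin N A x y = bilin N B x y"
  unfolding bilin_def by (intro sum.cong refl) auto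

lemma linear_coeff_eq_0_if_quadratic_nonneg:
  fixes G H :: real
  assumes nonneg: "\<And>t. 2 * t * G + t\<^sup>2 * H \<ge> 0" and G: "G \<ge> 0"
  shows "G = 0"
proof (rule ccontr)
  assume "G \<noteq> 0"
  with G have Gp: "G > 0" by simp
  define d where "d = \<bar>H\<bar> + 1"
  have d: "d > 0" "H < d" unfolding d_def by auto
  define t where "t = - G / d"
  have td: "t * d = - G" unfolding t_def using d by simp
  have "(2 * t * G + t\<^sup>2 * H) * d\<^sup>2 = 2 * (t * d) * G * d + (t * d)\<^sup>2 * H"
    by (simp add: algebra_simps power2_eq_square)
  also have "\<dots> = G\<^sup>2 * (H - 2 * d)" unfolding td by (simp add: algebra_simps power2_eq_square)
  also have "\<dots> < 0" using d Gp by (simp add: mult_pos_neg)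
  finally have "2 * t * G + t\<^sup>2 * H < 0" using d
    by (metis mult_nonneg_nonneg not_le zero_le_power2)
  then show False using nonneg[of t] by simp
qed

lemma bilin_min_on_unit_sphere_exists:
  assumes N: "N \<ge> 1"
  shows "\<exists>u. sqnorm N u = 1 \<and>
    (\<forall>y. sqnorm N y = 1 \<longrightarrow> (\<forall>j\<ge>N. y j = 0) \<longrightarrow> bilin N A u u \<le> bilin N A y y)"
proof -
  define C where "C = PiE UNIV (\<lambda>j::nat. if j < N then {-1..1::real} else {0})"
  define S where "S = C \<inter> sqnorm N -` {1}"
  have "compactin (product_topology (\<lambda>i. euclidean) UNIV) C"
    unfolding C_def by (subst compactin_PiE) auto
  then have "compact C" by (simp add: euclidean_product_topology)
  moreover have "continuous_on UNIV (sqnorm N)"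
    unfolding sqnorm_def
    by (intro continuous_intros continuous_on_product_then_coordinatewise continuous_on_id)
  then have "closed (sqnorm N -` {1})" by (auto intro: closed_vimage)
  ultimately have "compact S" unfolding S_def by (rule compact_Int_closed)
  have in_S: "y \<in> S" if y: "sqnorm N y = 1" "\<forall>j\<ge>N. y j = 0" for y
  proof -
    have "(y j)\<^sup>2 \<le> 1" if "j < N" for j
      using y(1) that unfolding sqnorm_def by (metis finite_lessThan lessThan_iff member_le_sum zero_le_power2)
    then show ?thesis unfolding S_def C_def using y by (auto simp: abs_square_le_1 abs_le_iff)
  qed
  have "sqnorm N (\<lambda>j. if j = 0 then 1 else 0) = (\<Sum>i<N. if i = 0 then 1 else 0)"
    unfolding sqnorm_def by (intro sum.cong) auto
  also have "\<dots> = 1" using N by simp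
  finally have "sqnorm N (\<lambda>j. if j = 0 then 1 else 0) = 1" .
  then have "S \<noteq> {}" using in_S[of "\<lambda>j. if j = 0 then 1 else 0"] N by auto
  moreover have "continuous_on S (\<lambda>x. bilin N A x x)"
    unfolding bilin_def
    by (intro continuous_intros continuous_on_product_then_coordinatewise continuous_on_id)
  ultimately obtain u where "u \<in> S" and "\<And>y. y \<in> S \<Longrightarrow> bilin N A u u \<le> bilin N A y y"
    using continuous_attains_inf[OF \<open>compact S\<close>] by blast
  then show ?thesis using in_S unfolding S_def by blast
qed

lemma bilin_ge_min_on_unit_sphere:
  assumes min: "\<And>y. sqnorm N y = 1 \<Longrightarrow> \<forall>j\<ge>N. y j = 0 \<Longrightarrow> \<mu> \<le> bilin N A y y"
  shows "\<mu> * sqnorm N x \<le> bilin N A x x"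
proof (cases "sqnorm N x = 0")
  case True
  then have "bilin N A x x = 0" by (simp add: sqnorm_eq_0_iff bilin_def)
  with True show ?thesis by simp
next
  case False
  define r where "r = sqnorm N x"
  have r0: "r > 0" using False sqnorm_nonneg[of N x] unfolding r_def by linarith
  define y where "y = (\<lambda>j. if j < N then x j / sqrt r else 0)"
  have "sqnorm N y = sqnorm N x / r" unfolding sqnorm_def y_def
    using r0 by (simp add: sum_divide_distrib power_divide)
  then have "\<mu> \<le> bilin N A y y" using r0 r_def by (intro min) (simp_all add: y_def)
  also have "bilin N A y y = bilin N A x x / r" unfolding bilin_def y_def using r0
    by (simp add: sum_divide_distrib)
  finally show ?thesis using r0 r_def by (simp add: le_divide_eq mult.commute)
qed

text \<open>Perturbing the minimiser along the residual g = A u - \<mu> u changes the quotient to first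
  order by 2 t |g|^2, so g = 0.\<close>
lemma bilin_minimizer_is_eigenvector:
  assumes sym: "\<And>i j. A i j = A j i" and u: "sqnorm N u = 1"
    and minimal: "\<And>x. bilin N A u u * sqnorm N x \<le> bilin N A x x"
  shows "\<forall>i<N. (\<Sum>j<N. A i j * u j) = bilin N A u u * u i"
proof -
  define \<mu> where "\<mu> = bilin N A u u"
  define g where "g = (\<lambda>i. (\<Sum>j<N. A i j * u j) - \<mu> * u i)"
  have "2 * t * sqnorm N g + t\<^sup>2 * (bilin N A g g - \<mu> * sqnorm N g) \<ge> 0" for t
  proof -
    have "bilin N A (\<lambda>i. u i + t * g i) (\<lambda>i. u i + t * g i) - \<mu> * sqnorm N (\<lambda>i. u i + t * g i) \<ge> 0"
      using minimal[of "\<lambda>i. u i + t * g i"] unfolding \<mu>_def by simp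
    moreover have "bilin N A g u = sqnorm N g + \<mu> * (\<Sum>i<N. u i * g i)"
      unfolding bilin_eq_sum_rows sqnorm_def g_def
      by (simp add: algebra_simps power2_eq_square sum.distrib sum_distrib_left sum_subtractf)
    ultimately show ?thesis
      unfolding bilin_add_scaled sqnorm_add_scaled using bilin_commute[of A N u g, OF sym] u \<mu>_def
      by (simp add: algebra_simps)
  qed
  then have "sqnorm N g = 0"
    by (rule linear_coeff_eq_0_if_quadratic_nonneg) (rule sqnorm_nonneg)
  then show ?thesis unfolding sqnorm_eq_0_iff g_def \<mu>_def by simp
qed

lemma eigenvalueI_coordinates:
  fixes M :: "real mat"
  assumes M: "M \<in> carrier_mat N N" and u: "sqnorm N u = 1"
    and ev: "\<forall>i<N. (\<Sum>j<N. M $$ (i, j) * u j) = \<mu> * u i"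
  shows "eigenvalue M \<mu>"
proof -
  define v where "v = Matrix.vec N u"
  have v: "v \<in> carrier_vec N" unfolding v_def by simp
  have "v \<noteq> 0\<^sub>v N"
  proof
    assume "v = 0\<^sub>v N"
    then have "\<forall>i<N. u i = 0" unfolding v_def by (metis index_vec index_zero_vec(1))
    then show False using u by (simp add: sqnorm_eq_0_iff[symmetric])
  qed
  moreover have "M *\<^sub>v v = \<mu> \<cdot>\<^sub>v v"
  proof (rule eq_vecI)
    fix i assume "i < dim_vec (\<mu> \<cdot>\<^sub>v v)"
    then have i: "i < N" using v by simp
    have "(M *\<^sub>v v) $ i = row M i \<bullet> v" using M i by simp
    also have "\<dots> = (\<Sum>j<N. M $$ (i, j) * u j)"
      unfolding scalar_prod_def v_def using M i by (simp add: lessThan_atLeast0)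
    also have "\<dots> = (\<mu> \<cdot>\<^sub>v v) $ i" using ev i v unfolding v_def by simp
    finally show "(M *\<^sub>v v) $ i = (\<mu> \<cdot>\<^sub>v v) $ i" .
  qed (use M v in simp)
  ultimately show ?thesis unfolding eigenvalue_def eigenvector_def using M v by auto
qed

lemma min_eigenvalue_le_bilin:
  fixes M :: "real mat"
  assumes N: "N \<ge> 1" and M: "M \<in> carrier_mat N N"
    and sym: "\<And>i j. i < N \<Longrightarrow> j < N \<Longrightarrow> M $$ (i, j) = M $$ (j, i)"
    and eig: "\<And>e. eigenvalue M e \<Longrightarrow> lo < e"
  shows "lo * sqnorm N x \<le> bilin N (\<lambda>i j. M $$ (i, j)) x x"
proof -
  define A where "A = (\<lambda>i j. if i < N \<and> j < N then M $$ (i, j) else 0)"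
  have symA: "\<And>i j. A i j = A j i" unfolding A_def using sym by auto
  have bilinA: "bilin N A y y = bilin N (\<lambda>i j. M $$ (i, j)) y y" for y
    unfolding A_def by (rule bilin_cong) simp
  obtain u where u: "sqnorm N u = 1"
    and "\<forall>y. sqnorm N y = 1 \<longrightarrow> (\<forall>j\<ge>N. y j = 0) \<longrightarrow> bilin N A u u \<le> bilin N A y y"
    using bilin_min_on_unit_sphere_exists[OF N] by blast
  then have min: "\<And>x. bilin N A u u * sqnorm N x \<le> bilin N A x x"
    by (intro bilin_ge_min_on_unit_sphere) blast
  have "eigenvalue M (bilin N A u u)"
    by (rule eigenvalueI_coordinates[OF M u])
      (use bilin_minimizer_is_eigenvector[OF symA u min] in \<open>simp add: A_def\<close>)
  then have "lo * sqnorm N x \<le> bilin N A u u * sqnorm N x"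
    using eig sqnorm_nonneg by (intro mult_right_mono) (auto simp: less_imp_le)
  then show ?thesis using min[of x] bilinA[of x] by linarith
qed

lemma bilin_le_max_eigenvalue:
  fixes M :: "real mat"
  assumes N: "N \<ge> 1" and M: "M \<in> carrier_mat N N"
    and sym: "\<And>i j. i < N \<Longrightarrow> j < N \<Longrightarrow> M $$ (i, j) = M $$ (j, i)"
    and eig: "\<And>e. eigenvalue M e \<Longrightarrow> e < hi"
  shows "bilin N (\<lambda>i j. M $$ (i, j)) x x \<le> hi * sqnorm N x"
proof -
  have eig_neg: "eigenvalue M (- e)" if neg: "eigenvalue (- M) e" for e
  proof -
    obtain v where v: "v \<in> carrier_vec N" "v \<noteq> 0\<^sub>v N" "- (M *\<^sub>v v) = e \<cdot>\<^sub>v v"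
      using neg M unfolding eigenvalue_def eigenvector_def by auto
    have "M *\<^sub>v v = - (e \<cdot>\<^sub>v v)" using v(3) by (metis uminus_uminus_vec)
    also have "\<dots> = (- e) \<cdot>\<^sub>v v" by (rule eq_vecI) auto
    finally have "M *\<^sub>v v = (- e) \<cdot>\<^sub>v v" .
    then show ?thesis using v M unfolding eigenvalue_def eigenvector_def by auto
  qed
  have "- hi * sqnorm N x \<le> bilin N (\<lambda>i j. (- M) $$ (i, j)) x x"
  proof (rule min_eigenvalue_le_bilin[OF N uminus_carrier_mat[OF M]])
    show "(- M) $$ (i, j) = (- M) $$ (j, i)" if "i < N" "j < N" for i j
      using that M sym[OF that] by simp
    show "- hi < e" if "eigenvalue (- M) e" for e
      using eig[OF eig_neg[OF that]] by simp
  qed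
  also have "\<dots> = - bilin N (\<lambda>i j. M $$ (i, j)) x x"
    using M unfolding bilin_def by (simp add: sum_negf)
  finally show ?thesis by simp
qed

lemma scalar_prod_mult_mat_vec_eq_bilin:
  fixes A :: "real mat"
  assumes A: "A \<in> carrier_mat N N" and x: "dim_vec x = N" and y: "dim_vec y = N"
  shows "scalar_prod x (A *\<^sub>v y) = bilin N (\<lambda>p q. A $$ (p, q)) (\<lambda>p. x $ p) (\<lambda>p. y $ p)"
  unfolding bilin_eq_sum_rows scalar_prod_def using A x y
  by (simp add: lessThan_atLeast0 scalar_prod_def mult.commute)

lemma mat_inverse_of_pos_def:
  fixes A :: "real mat"
  assumes A: "A \<in> carrier_mat N N"
    and pd: "\<And>x. dim_vec x = N \<Longrightarrow> x \<noteq> 0\<^sub>v N \<Longrightarrow> scalar_prod x (A *\<^sub>v x) > 0"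
  shows "A * the (mat_inverse A) = 1\<^sub>m N" "the (mat_inverse A) * A = 1\<^sub>m N"
    "the (mat_inverse A) \<in> carrier_mat N N"
proof -
  have "det A \<noteq> 0"
  proof
    assume "det A = 0"
    then obtain v where v: "v \<in> carrier_vec N" "v \<noteq> 0\<^sub>v N" "A *\<^sub>v v = 0\<^sub>v N"
      using det_0_iff_vec_prod_zero[OF A] by blast
    then show False using pd[of v] by simp
  qed
  then have "A \<in> Units (ring_mat TYPE(real) N undefined)" by (rule det_non_zero_imp_unit[OF A])
  then obtain B where "mat_inverse A = Some B" using mat_inverse(1)[OF A] by fastforce
  then show "A * the (mat_inverse A) = 1\<^sub>m N" "the (mat_inverse A) * A = 1\<^sub>m N"
    "the (mat_inverse A) \<in> carrier_mat N N"
    using mat_inverse(2)[OF A] by simp_all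
qed

section \<open>The block-diagonal matrix S\<close>

definition block_factor :: "real \<Rightarrow> real \<Rightarrow> (nat \<Rightarrow> nat) \<Rightarrow> nat \<Rightarrow> real" where
  "block_factor \<alpha> \<nu> nb i = 1 / (real (nb i) * (\<alpha> * real (nb i) powr (- \<nu>)))"

lemma block_factor_pos: "\<alpha> > 0 \<Longrightarrow> nb i > 0 \<Longrightarrow> block_factor \<alpha> \<nu> nb i > 0"
  unfolding block_factor_def by simp

text \<open>Not a simp rule: its right-hand side is an instance of its left-hand side (c = 1).\<close>
lemma Rent_same_bw: "0 \<le> c \<Longrightarrow> Rent fe Finv c c t t' = Rent fe Finv 1 1 t t' / c"
  unfolding Rent_def by simp

lemma Rent_scale: "0 < \<alpha> \<Longrightarrow> 0 \<le> h \<Longrightarrow> 0 \<le> h' \<Longrightarrow>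
    Rent fe Finv (\<alpha> * h) (\<alpha> * h') t t' = Rent fe Finv h h' t t' / \<alpha>"
  unfolding Rent_def by (simp add: real_sqrt_mult power2_eq_square[symmetric])

lemma Smat_carrier: "Smat fe Finv m J nb h tau \<in> carrier_mat (m * J) (m * J)"
  unfolding Smat_def by simp

lemma Smat_sym:
  assumes "p < m * J" "q < m * J"
  shows "Smat fe Finv m J nb h tau $$ (p, q) = Smat fe Finv m J nb h tau $$ (q, p)"
proof -
  have "p mod J < J" "q mod J < J" using assms
    by (metis mod_less_divisor mult_0_right neq0_conv not_less_zero)+
  then show ?thesis using assms
    unfolding Smat_def Rmat_def Rent_def by (auto simp: min.commute mult.commute)
qed

lemma Smat_bw_scale:
  assumes "\<alpha> > 0"
  shows "Smat fe Finv m J nb (bw \<alpha> \<nu> nb) tau = (1 / \<alpha>) \<cdot>\<^sub>m Smat fe Finv m J nb (bw 1 \<nu> nb) tau"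
proof (rule eq_matI)
  fix p q assume "p < dim_row ((1 / \<alpha>) \<cdot>\<^sub>m Smat fe Finv m J nb (bw 1 \<nu> nb) tau)"
    "q < dim_col ((1 / \<alpha>) \<cdot>\<^sub>m Smat fe Finv m J nb (bw 1 \<nu> nb) tau)"
  then have pq: "p < m * J" "q < m * J" by (simp_all add: Smat_def)
  then have "p mod J < J" "q mod J < J"
    by (metis mod_less_divisor mult_0_right neq0_conv not_less_zero)+
  then show "Smat fe Finv m J nb (bw \<alpha> \<nu> nb) tau $$ (p, q)
      = ((1 / \<alpha>) \<cdot>\<^sub>m Smat fe Finv m J nb (bw 1 \<nu> nb) tau) $$ (p, q)"
    using pq assms unfolding Smat_def Rmat_def bw_def by (simp add: Rent_scale)
qed (simp_all add: Smat_def)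

lemma Rmat_bw_entry:
  assumes "0 \<le> \<alpha>" "j < J" "j' < J"
  shows "Rmat fe Finv J (bw \<alpha> \<nu> nb) tau i $$ (j, j')
    = R1mat fe Finv J tau i $$ (j, j') / (\<alpha> * real (nb i) powr (- \<nu>))"
proof -
  have c: "0 \<le> \<alpha> * real (nb i) powr (- \<nu>)" using assms(1) by simp
  show ?thesis
    using assms unfolding R1mat_def Rmat_def bw_def by (simp add: Rent_same_bw[OF c])
qed

lemma Smat_bw_entry:
  assumes "0 \<le> \<alpha>" "i < m" "i' < m" "j < J" "j' < J"
  shows "Smat fe Finv m J nb (bw \<alpha> \<nu> nb) tau $$ (j + i * J, j' + i' * J)
    = (if i = i' then block_factor \<alpha> \<nu> nb (i + 1) * R1mat fe Finv J tau (i + 1) $$ (j, j') else 0)"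
proof -
  have lt: "jj + ii * J < m * J" if "ii < m" "jj < J" for ii jj
  proof -
    have "jj + ii * J < (ii + 1) * J" using that by simp
    also have "\<dots> \<le> m * J" using that by (intro mult_le_mono1) simp
    finally show ?thesis .
  qed
  have dm: "(j + i * J) div J = i" "(j + i * J) mod J = j" "(j' + i' * J) div J = i'"
    "(j' + i' * J) mod J = j'"
    using assms by auto
  have "Smat fe Finv m J nb (bw \<alpha> \<nu> nb) tau $$ (j + i * J, j' + i' * J)
      = (if i = i' then Rmat fe Finv J (bw \<alpha> \<nu> nb) tau (i + 1) $$ (j, j') / real (nb (i + 1)) else 0)"
    unfolding Smat_def using lt[OF assms(2,4)] lt[OF assms(3,5)] dm by (cases "i = i'") simp_all
  then show ?thesis
    unfolding block_factor_def using Rmat_bw_entry[OF assms(1,4,5)] by simp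
qed

lemma bilin_Smat:
  assumes "0 \<le> \<alpha>"
  shows "bilin (m * J) (\<lambda>p q. Smat fe Finv m J nb (bw \<alpha> \<nu> nb) tau $$ (p, q)) x y
     = (\<Sum>i<m. block_factor \<alpha> \<nu> nb (i + 1) *
          bilin J (\<lambda>a b. R1mat fe Finv J tau (i + 1) $$ (a, b)) (\<lambda>j. x (j + i * J)) (\<lambda>j. y (j + i * J)))"
proof -
  let ?S = "Smat fe Finv m J nb (bw \<alpha> \<nu> nb) tau"
  let ?R = "\<lambda>i a b. R1mat fe Finv J tau (i + 1) $$ (a, b)"
  let ?c = "\<lambda>i. block_factor \<alpha> \<nu> nb (i + 1)"
  have "bilin (m * J) (\<lambda>p q. ?S $$ (p, q)) x y
      = (\<Sum>i<m. \<Sum>j<J. \<Sum>i'<m. \<Sum>j'<J. ?S $$ (j + i * J, j' + i' * J) * x (j + i * J) * y (j' + i' * J))"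
    unfolding bilin_def sum_mult_product by simp
  also have "\<dots> = (\<Sum>i<m. \<Sum>j<J. \<Sum>j'<J. ?c i * ?R i j j' * x (j + i * J) * y (j' + i * J))"
  proof (rule sum.cong[OF refl], rule sum.cong[OF refl])
    fix i j assume i: "i \<in> {..<m}" and j: "j \<in> {..<J}"
    have "(\<Sum>i'<m. \<Sum>j'<J. ?S $$ (j + i * J, j' + i' * J) * x (j + i * J) * y (j' + i' * J))
        = (\<Sum>i'<m. if i' = i then (\<Sum>j'<J. ?c i * ?R i j j' * x (j + i * J) * y (j' + i * J)) else 0)"
      using i j assms by (intro sum.cong refl) (auto simp: Smat_bw_entry)
    also have "\<dots> = (\<Sum>j'<J. ?c i * ?R i j j' * x (j + i * J) * y (j' + i * J))"
      using i by simp
    finally show "(\<Sum>i'<m. \<Sum>j'<J. ?S $$ (j + i * J, j' + i' * J) * x (j + i * J) * y (j' + i' * J))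
        = (\<Sum>j'<J. ?c i * ?R i j j' * x (j + i * J) * y (j' + i * J))" .
  qed
  also have "\<dots> = (\<Sum>i<m. ?c i * bilin J (?R i) (\<lambda>j. x (j + i * J)) (\<lambda>j. y (j + i * J)))"
    unfolding bilin_def by (simp add: sum_distrib_left mult.assoc)
  finally show ?thesis .
qed

lemma R1mat_bilin_bounds:
  assumes J: "J \<ge> 1"
    and eig: "\<And>e. eigenvalue (R1mat fe Finv J tau i) e \<Longrightarrow> lmin < e \<and> e < lmax"
  shows "lmin * sqnorm J x \<le> bilin J (\<lambda>a b. R1mat fe Finv J tau i $$ (a, b)) x x"
    and "bilin J (\<lambda>a b. R1mat fe Finv J tau i $$ (a, b)) x x \<le> lmax * sqnorm J x"
proof -
  have M: "R1mat fe Finv J tau i \<in> carrier_mat J J" unfolding R1mat_def Rmat_def by simp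
  have sym: "R1mat fe Finv J tau i $$ (a, b) = R1mat fe Finv J tau i $$ (b, a)"
    if "a < J" "b < J" for a b
    using that unfolding R1mat_def Rmat_def Rent_def by (auto simp: min.commute mult.commute)
  show "lmin * sqnorm J x \<le> bilin J (\<lambda>a b. R1mat fe Finv J tau i $$ (a, b)) x x"
    by (rule min_eigenvalue_le_bilin[OF J M sym]) (use eig in auto)
  show "bilin J (\<lambda>a b. R1mat fe Finv J tau i $$ (a, b)) x x \<le> lmax * sqnorm J x"
    by (rule bilin_le_max_eigenvalue[OF J M sym]) (use eig in auto)
qed

lemma sqnorm_blocks: "sqnorm (m * J) x = (\<Sum>i<m. sqnorm J (\<lambda>j. x (j + i * J)))"
  unfolding sqnorm_def sum_mult_product by simp

lemma Smat_bilin_lower: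
  assumes J: "J \<ge> 1" and \<alpha>: "0 \<le> \<alpha>" and lmin: "0 < lmin"
    and eig: "\<forall>i e. i \<in> {1..m} \<longrightarrow> eigenvalue (R1mat fe Finv J tau i) e \<longrightarrow> lmin < e \<and> e < lmax"
    and cl: "0 \<le> cl" "\<forall>i\<in>{1..m}. cl \<le> block_factor \<alpha> \<nu> nb i"
  shows "lmin * cl * sqnorm (m * J) x
    \<le> bilin (m * J) (\<lambda>p q. Smat fe Finv m J nb (bw \<alpha> \<nu> nb) tau $$ (p, q)) x x"
proof -
  let ?R = "\<lambda>i a b. R1mat fe Finv J tau (i + 1) $$ (a, b)"
  let ?x = "\<lambda>i j. x (j + i * J)"
  have "lmin * cl * sqnorm (m * J) x = (\<Sum>i<m. cl * (lmin * sqnorm J (?x i)))"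
    unfolding sqnorm_blocks by (simp add: sum_distrib_left mult_ac)
  also have "\<dots> \<le> (\<Sum>i<m. block_factor \<alpha> \<nu> nb (i + 1) * bilin J (?R i) (?x i) (?x i))"
  proof (rule sum_mono)
    fix i assume i: "i \<in> {..<m}"
    have "eigenvalue (R1mat fe Finv J tau (i + 1)) e \<Longrightarrow> lmin < e \<and> e < lmax" for e
      using eig[rule_format, of "i + 1" e] i by simp
    then have "lmin * sqnorm J (?x i) \<le> bilin J (?R i) (?x i) (?x i)"
      by (rule R1mat_bilin_bounds(1)[OF J])
    moreover have "cl \<le> block_factor \<alpha> \<nu> nb (i + 1)" using cl i by simp
    ultimately
    show "cl * (lmin * sqnorm J (?x i)) \<le> block_factor \<alpha> \<nu> nb (i + 1) * bilin J (?R i) (?x i) (?x i)"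
      using cl(1) lmin sqnorm_nonneg[of J "?x i"] by (intro mult_mono) auto
  qed
  also have "\<dots> = bilin (m * J) (\<lambda>p q. Smat fe Finv m J nb (bw \<alpha> \<nu> nb) tau $$ (p, q)) x x"
    using bilin_Smat[OF \<alpha>] by simp
  finally show ?thesis .
qed

lemma Smat_bilin_upper:
  assumes J: "J \<ge> 1" and \<alpha>: "0 \<le> \<alpha>" and lmin: "0 < lmin"
    and eig: "\<forall>i e. i \<in> {1..m} \<longrightarrow> eigenvalue (R1mat fe Finv J tau i) e \<longrightarrow> lmin < e \<and> e < lmax"
    and ch: "\<forall>i\<in>{1..m}. block_factor \<alpha> \<nu> nb i \<le> ch"
  shows "bilin (m * J) (\<lambda>p q. Smat fe Finv m J nb (bw \<alpha> \<nu> nb) tau $$ (p, q)) x x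
    \<le> lmax * ch * sqnorm (m * J) x"
proof -
  let ?R = "\<lambda>i a b. R1mat fe Finv J tau (i + 1) $$ (a, b)"
  let ?x = "\<lambda>i j. x (j + i * J)"
  have "bilin (m * J) (\<lambda>p q. Smat fe Finv m J nb (bw \<alpha> \<nu> nb) tau $$ (p, q)) x x
      = (\<Sum>i<m. block_factor \<alpha> \<nu> nb (i + 1) * bilin J (?R i) (?x i) (?x i))"
    using bilin_Smat[OF \<alpha>] by simp
  also have "\<dots> \<le> (\<Sum>i<m. ch * (lmax * sqnorm J (?x i)))"
  proof (rule sum_mono)
    fix i assume i: "i \<in> {..<m}"
    have eig_i: "eigenvalue (R1mat fe Finv J tau (i + 1)) e \<Longrightarrow> lmin < e \<and> e < lmax" for e
      using eig[rule_format, of "i + 1" e] i by simp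
    have lo: "lmin * sqnorm J (?x i) \<le> bilin J (?R i) (?x i) (?x i)"
      and hi: "bilin J (?R i) (?x i) (?x i) \<le> lmax * sqnorm J (?x i)"
      using R1mat_bilin_bounds[OF J eig_i] by blast+
    have "0 \<le> bilin J (?R i) (?x i) (?x i)"
      using lo lmin sqnorm_nonneg[of J "?x i"] by (meson less_imp_le mult_nonneg_nonneg order_trans)
    moreover have "0 \<le> block_factor \<alpha> \<nu> nb (i + 1)" "block_factor \<alpha> \<nu> nb (i + 1) \<le> ch"
      using \<alpha> ch i unfolding block_factor_def by simp_all
    ultimately show "block_factor \<alpha> \<nu> nb (i + 1) * bilin J (?R i) (?x i) (?x i) \<le> ch * (lmax * sqnorm J (?x i))"
      using hi by (intro mult_mono) auto
  qed
  also have "\<dots> = lmax * ch * sqnorm (m * J) x"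
    unfolding sqnorm_blocks by (simp add: sum_distrib_left mult_ac)
  finally show ?thesis .
qed

lemma Smat_pos_def:
  assumes J: "J \<ge> 1" and \<alpha>: "0 < \<alpha>" and nb: "\<forall>i\<in>{1..m}. nb i > 0" and lmin: "0 < lmin"
    and eig: "\<forall>i e. i \<in> {1..m} \<longrightarrow> eigenvalue (R1mat fe Finv J tau i) e \<longrightarrow> lmin < e \<and> e < lmax"
    and x: "dim_vec x = m * J" "x \<noteq> 0\<^sub>v (m * J)"
  shows "0 < scalar_prod x (Smat fe Finv m J nb (bw \<alpha> \<nu> nb) tau *\<^sub>v x)"
proof -
  define cl where "cl = Min (insert 1 (block_factor \<alpha> \<nu> nb ` {1..m}))"
  have "0 < cl" unfolding cl_def using \<alpha> nb by (auto simp: block_factor_pos)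
  moreover have "\<forall>i\<in>{1..m}. cl \<le> block_factor \<alpha> \<nu> nb i"
    unfolding cl_def by (intro ballI Min_le) auto
  ultimately have cl: "0 < cl" "\<forall>i\<in>{1..m}. cl \<le> block_factor \<alpha> \<nu> nb i" by blast+
  obtain p where p: "p < m * J" "x $ p \<noteq> 0"
    using x by (metis eq_vecI index_zero_vec(1) index_zero_vec(2))
  have "0 < (x $ p)\<^sup>2" using p by simp
  also have "\<dots> \<le> sqnorm (m * J) (\<lambda>p. x $ p)"
    unfolding sqnorm_def using p by (intro member_le_sum) auto
  finally have "0 < lmin * cl * sqnorm (m * J) (\<lambda>p. x $ p)" using lmin cl by simp
  also have "\<dots> \<le> scalar_prod x (Smat fe Finv m J nb (bw \<alpha> \<nu> nb) tau *\<^sub>v x)"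
    using Smat_bilin_lower[OF J less_imp_le[OF \<alpha>] lmin eig less_imp_le[OF cl(1)] cl(2)]
      scalar_prod_mult_mat_vec_eq_bilin[OF Smat_carrier x(1) x(1)]
    by simp
  finally show ?thesis .
qed

lemma Sinv_is_inverse:
  assumes J: "J \<ge> 1" and \<alpha>: "0 < \<alpha>" and nb: "\<forall>i\<in>{1..m}. nb i > 0" and lmin: "0 < lmin"
    and eig: "\<forall>i e. i \<in> {1..m} \<longrightarrow> eigenvalue (R1mat fe Finv J tau i) e \<longrightarrow> lmin < e \<and> e < lmax"
  shows "Smat fe Finv m J nb (bw \<alpha> \<nu> nb) tau * Sinv fe Finv m J nb (bw \<alpha> \<nu> nb) tau = 1\<^sub>m (m * J)"
    "Sinv fe Finv m J nb (bw \<alpha> \<nu> nb) tau * Smat fe Finv m J nb (bw \<alpha> \<nu> nb) tau = 1\<^sub>m (m * J)"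
    "Sinv fe Finv m J nb (bw \<alpha> \<nu> nb) tau \<in> carrier_mat (m * J) (m * J)"
  using mat_inverse_of_pos_def[OF Smat_carrier Smat_pos_def[OF J \<alpha> nb lmin eig]]
  unfolding Sinv_def by auto

section \<open>Optimal weights\<close>

lemma mult_mat_vec_inverse_comb:
  fixes S Si :: "real mat" and F :: "real Matrix.vec"
  assumes S: "S \<in> carrier_mat N N" and Si: "Si \<in> carrier_mat N N" and inv: "S * Si = 1\<^sub>m N"
    and F: "F \<in> carrier_vec N"
  shows "S *\<^sub>v (k \<cdot>\<^sub>v (c1 \<cdot>\<^sub>v (Si *\<^sub>v ones N) - c2 \<cdot>\<^sub>v (Si *\<^sub>v F)))
    = k \<cdot>\<^sub>v (c1 \<cdot>\<^sub>v ones N - c2 \<cdot>\<^sub>v F)"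
proof -
  have ones: "ones N \<in> carrier_vec N" unfolding ones_def by simp
  have cancel: "S *\<^sub>v (Si *\<^sub>v y) = y" if "y \<in> carrier_vec N" for y
    using that S Si inv by (metis assoc_mult_mat_vec one_mult_mat_vec)
  have d: "Si *\<^sub>v ones N \<in> carrier_vec N" "Si *\<^sub>v F \<in> carrier_vec N" using Si ones F by auto
  have "S *\<^sub>v (k \<cdot>\<^sub>v (c1 \<cdot>\<^sub>v (Si *\<^sub>v ones N) - c2 \<cdot>\<^sub>v (Si *\<^sub>v F)))
      = k \<cdot>\<^sub>v (S *\<^sub>v (c1 \<cdot>\<^sub>v (Si *\<^sub>v ones N)) - S *\<^sub>v (c2 \<cdot>\<^sub>v (Si *\<^sub>v F)))"
    using S d by (simp add: mult_mat_vec mult_minus_distrib_mat_vec)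
  also have "\<dots> = k \<cdot>\<^sub>v (c1 \<cdot>\<^sub>v ones N - c2 \<cdot>\<^sub>v F)"
    using S d cancel ones F by (simp add: mult_mat_vec[OF S])
  finally show ?thesis .
qed

lemma smult_mat_mult_mat_vec:
  fixes A :: "real mat"
  assumes "A \<in> carrier_mat nr nc" "v \<in> carrier_vec nc"
  shows "(k \<cdot>\<^sub>m A) *\<^sub>v v = k \<cdot>\<^sub>v (A *\<^sub>v v)"
  using assms by (intro eq_vecI) (auto simp: scalar_prod_def sum_distrib_left mult.assoc)

lemma inverse_smult_mat_vec:
  fixes S Si Si' :: "real mat" and F :: "real Matrix.vec"
  assumes S: "S \<in> carrier_mat N N" and Si: "Si \<in> carrier_mat N N" and Si': "Si' \<in> carrier_mat N N"
    and inv: "(c \<cdot>\<^sub>m S) * Si' = 1\<^sub>m N" and inv': "Si * S = 1\<^sub>m N"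
    and c: "c \<noteq> 0" and F: "F \<in> carrier_vec N"
  shows "Si' *\<^sub>v F = (1 / c) \<cdot>\<^sub>v (Si *\<^sub>v F)"
proof -
  define d where "d = Si' *\<^sub>v F"
  have d: "d \<in> carrier_vec N" unfolding d_def using Si' F by simp
  have "(c \<cdot>\<^sub>m S) *\<^sub>v d = F" unfolding d_def using S Si' F inv
    by (metis assoc_mult_mat_vec one_mult_mat_vec smult_carrier_mat)
  then have "F = c \<cdot>\<^sub>v (S *\<^sub>v d)" using S d by (simp add: smult_mat_mult_mat_vec)
  then have "Si *\<^sub>v F = c \<cdot>\<^sub>v (Si *\<^sub>v (S *\<^sub>v d))" using Si S d by (simp add: mult_mat_vec)
  also have "Si *\<^sub>v (S *\<^sub>v d) = d" using Si S d inv'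
    by (metis assoc_mult_mat_vec one_mult_mat_vec)
  finally show ?thesis unfolding d_def using c by (simp add: smult_smult_assoc)
qed

text \<open>If S w lies in the span of the all-ones vector and F, the constraints make the difference
  e between the uniform weights and w S-orthogonal to w, so that the S-norm of the uniform
  weights is the S-norm of w plus that of e.\<close>
lemma bilin_le_uniform_if_stationary:
  fixes S :: "real mat" and F w :: "real Matrix.vec"
  assumes S: "S \<in> carrier_mat N N" and N: "N > 0"
    and sym: "\<And>p q. p < N \<Longrightarrow> q < N \<Longrightarrow> S $$ (p, q) = S $$ (q, p)"
    and psd: "\<And>x. bilin N (\<lambda>p q. S $$ (p, q)) x x \<ge> 0"
    and w: "w \<in> carrier_vec N" and F: "F \<in> carrier_vec N"
    and Sw: "S *\<^sub>v w = k \<cdot>\<^sub>v (c1 \<cdot>\<^sub>v ones N - c2 \<cdot>\<^sub>v F)"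
    and sum_w: "(\<Sum>p<N. w $ p) = 1" and sum_wF: "(\<Sum>p<N. w $ p * F $ p) = 0"
    and choice: "c2 = 0 \<or> (\<Sum>p<N. F $ p) = 0"
  shows "bilin N (\<lambda>p q. S $$ (p, q)) (\<lambda>p. w $ p) (\<lambda>p. w $ p)
       \<le> bilin N (\<lambda>p q. S $$ (p, q)) (\<lambda>p. 1 / real N) (\<lambda>p. 1 / real N)"
proof -
  define A where "A = (\<lambda>p q. if p < N \<and> q < N then S $$ (p, q) else 0)"
  have symA: "\<And>p q. A p q = A q p" unfolding A_def using sym by auto
  have bilinA: "bilin N (\<lambda>p q. S $$ (p, q)) x y = bilin N A x y" for x y
    unfolding A_def by (rule bilin_cong) simp
  define e where "e = (\<lambda>p. 1 / real N - w $ p)"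
  have row: "(\<Sum>q<N. A p q * w $ q) = k * (c1 - c2 * F $ p)" if p: "p < N" for p
  proof -
    have "(\<Sum>q<N. A p q * w $ q) = (S *\<^sub>v w) $ p"
      unfolding A_def using S p w by (simp add: scalar_prod_def lessThan_atLeast0)
    also have "\<dots> = k * (c1 - c2 * F $ p)" unfolding Sw using p F by (simp add: ones_def)
    finally show ?thesis .
  qed
  have sum_e: "(\<Sum>p<N. e p) = 0" unfolding e_def using sum_w N by (simp add: sum_subtractf)
  have "bilin N A e (\<lambda>p. w $ p) = (\<Sum>p<N. e p * (k * (c1 - c2 * F $ p)))"
    unfolding bilin_eq_sum_rows using row by simp
  also have "\<dots> = k * c1 * (\<Sum>p<N. e p) - k * c2 * (\<Sum>p<N. e p * F $ p)"
    by (simp add: algebra_simps sum_distrib_left sum_subtractf)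
  also have "(\<Sum>p<N. e p * F $ p) = (\<Sum>p<N. F $ p) / real N"
    unfolding e_def using sum_wF by (simp add: algebra_simps sum_subtractf sum_divide_distrib)
  finally have cross: "bilin N A e (\<lambda>p. w $ p) = 0" using sum_e choice by auto
  have "bilin N A (\<lambda>p. 1 / real N) (\<lambda>p. 1 / real N)
      = bilin N A (\<lambda>p. w $ p + 1 * e p) (\<lambda>p. w $ p + 1 * e p)"
    unfolding e_def by simp
  also have "\<dots> = bilin N A (\<lambda>p. w $ p) (\<lambda>p. w $ p) + bilin N A e e"
    unfolding bilin_add_scaled using cross bilin_commute[of A N e "\<lambda>p. w $ p", OF symA] by simp
  finally have "bilin N A (\<lambda>p. 1 / real N) (\<lambda>p. 1 / real N)
      = bilin N A (\<lambda>p. w $ p) (\<lambda>p. w $ p) + bilin N A e e" .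
  moreover have "bilin N A e e \<ge> 0" using psd[of e] bilinA by simp
  ultimately show ?thesis using bilinA by simp
qed

text \<open>The centring level tau** is defined with the bandwidths h(1, \<nu>); since
  S(h(\<alpha>, \<nu>)) = S(h(1, \<nu>)) / \<alpha>, it also makes c2 vanish for h(\<alpha>, \<nu>).\<close>
lemma Sinv_bw_orthogonal:
  assumes J: "J \<ge> 1" and \<alpha>: "\<alpha> > 0" and nb: "\<forall>i\<in>{1..m}. nb i > 0" and lmin: "0 < lmin"
    and eig: "\<forall>i e. i \<in> {1..m} \<longrightarrow> eigenvalue (R1mat fe Finv J tau i) e \<longrightarrow> lmin < e \<and> e < lmax"
    and orth: "scalar_prod (ones (m * J)) (Sinv fe Finv m J nb (bw 1 \<nu> nb) tau *\<^sub>v Fvec Finv m J tau) = 0"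
  shows "scalar_prod (Sinv fe Finv m J nb (bw \<alpha> \<nu> nb) tau *\<^sub>v Fvec Finv m J tau) (ones (m * J)) = 0"
proof -
  let ?S = "Smat fe Finv m J nb (bw \<alpha> \<nu> nb) tau" and ?S1 = "Smat fe Finv m J nb (bw 1 \<nu> nb) tau"
  let ?Si = "Sinv fe Finv m J nb (bw \<alpha> \<nu> nb) tau" and ?Si1 = "Sinv fe Finv m J nb (bw 1 \<nu> nb) tau"
  define F where "F = Fvec Finv m J tau"
  have F: "F \<in> carrier_vec (m * J)" unfolding F_def Fvec_def stack_def by simp
  note inv = Sinv_is_inverse[OF J \<alpha> nb lmin eig, of \<nu>]
  note inv1 = Sinv_is_inverse[OF J _ nb lmin eig, of 1 \<nu>]
  have "((1 / \<alpha>) \<cdot>\<^sub>m ?S1) * ?Si = 1\<^sub>m (m * J)" using inv(1) Smat_bw_scale[OF \<alpha>] by metis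
  then have "?Si *\<^sub>v F = \<alpha> \<cdot>\<^sub>v (?Si1 *\<^sub>v F)"
    using inverse_smult_mat_vec[of ?S1 "m * J" ?Si1 ?Si "1 / \<alpha>" F] Smat_carrier inv inv1 \<alpha> F by simp
  then show ?thesis
    using orth inv1 F unfolding F_def[symmetric] by (simp add: comm_scalar_prod[of _ "m * J"] ones_def)
qed

lemma opt_weights_bilin_le_uniform:
  fixes fe Finv :: "real \<Rightarrow> real" and nb :: "nat \<Rightarrow> nat" and tau :: "nat \<Rightarrow> nat \<Rightarrow> real"
    and w :: "real Matrix.vec"
  assumes J: "J \<ge> 1" and m: "m \<ge> 1" and nb: "\<forall>i\<in>{1..m}. nb i > 0" and \<alpha>: "\<alpha> > 0"
    and lmin: "0 < lmin"
    and eig: "\<forall>i e. i \<in> {1..m} \<longrightarrow> eigenvalue (R1mat fe Finv J tau i) e \<longrightarrow> lmin < e \<and> e < lmax"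
    and w: "w = opt_weights fe Finv m J nb (bw \<alpha> \<nu> nb) tau"
    and sum_w: "(\<Sum>p<m * J. w $ p) = 1"
    and sum_wF: "(\<Sum>p<m * J. w $ p * Fvec Finv m J tau $ p) = 0"
    and choice: "(\<Sum>p<m * J. Fvec Finv m J tau $ p) = 0
       \<or> scalar_prod (ones (m * J)) (Sinv fe Finv m J nb (bw 1 \<nu> nb) tau *\<^sub>v Fvec Finv m J tau) = 0"
  defines "N \<equiv> m * J"
  shows "w \<in> carrier_vec N"
    and "bilin N (\<lambda>p q. Smat fe Finv m J nb (bw \<alpha> \<nu> nb) tau $$ (p, q)) (\<lambda>p. w $ p) (\<lambda>p. w $ p)
       \<le> bilin N (\<lambda>p q. Smat fe Finv m J nb (bw \<alpha> \<nu> nb) tau $$ (p, q)) (\<lambda>p. 1 / real N) (\<lambda>p. 1 / real N)"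
proof -
  let ?S = "Smat fe Finv m J nb (bw \<alpha> \<nu> nb) tau" and ?Si = "Sinv fe Finv m J nb (bw \<alpha> \<nu> nb) tau"
  define F where "F = Fvec Finv m J tau"
  have F: "F \<in> carrier_vec N" unfolding F_def Fvec_def stack_def N_def by simp
  note inv = Sinv_is_inverse[OF J \<alpha> nb lmin eig, of \<nu>, folded N_def]
  define c1 where "c1 = scalar_prod (?Si *\<^sub>v F) F"
  define c2 where "c2 = scalar_prod (?Si *\<^sub>v F) (ones N)"
  define c3 where "c3 = scalar_prod (?Si *\<^sub>v ones N) (ones N)"
  have w_eq: "w = (1 / (c1 * c3 - c2\<^sup>2)) \<cdot>\<^sub>v (c1 \<cdot>\<^sub>v (?Si *\<^sub>v ones N) - c2 \<cdot>\<^sub>v (?Si *\<^sub>v F))"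
    unfolding w opt_weights_def Let_def c1_def c2_def c3_def F_def N_def by simp
  then show w_carrier: "w \<in> carrier_vec N" using inv F by (auto simp: ones_def)
  have c2: "c2 = 0 \<or> (\<Sum>p<N. F $ p) = 0"
    using choice Sinv_bw_orthogonal[OF J \<alpha> nb lmin eig] unfolding c2_def F_def N_def by auto
  show "bilin N (\<lambda>p q. ?S $$ (p, q)) (\<lambda>p. w $ p) (\<lambda>p. w $ p)
       \<le> bilin N (\<lambda>p q. ?S $$ (p, q)) (\<lambda>p. 1 / real N) (\<lambda>p. 1 / real N)"
  proof (rule bilin_le_uniform_if_stationary[OF _ _ _ _ w_carrier F _ _ _ c2])
    show "?S \<in> carrier_mat N N" unfolding N_def by (rule Smat_carrier)
    show "N > 0" unfolding N_def using J m by simp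
    show "?S $$ (p, q) = ?S $$ (q, p)" if "p < N" "q < N" for p q
      using that unfolding N_def by (rule Smat_sym)
    have "\<forall>i\<in>{1..m}. 0 \<le> block_factor \<alpha> \<nu> nb i" using \<alpha> by (simp add: block_factor_def)
    then show "bilin N (\<lambda>p q. ?S $$ (p, q)) x x \<ge> 0" for x
      using Smat_bilin_lower[OF J less_imp_le[OF \<alpha>] lmin eig order_refl, of \<nu> nb x]
      unfolding N_def by simp
    show "?S *\<^sub>v w = (1 / (c1 * c3 - c2\<^sup>2)) \<cdot>\<^sub>v (c1 \<cdot>\<^sub>v ones N - c2 \<cdot>\<^sub>v F)"
      unfolding w_eq using Smat_carrier inv F unfolding N_def by (intro mult_mat_vec_inverse_comb) auto
  qed (use sum_w sum_wF in \<open>simp_all add: N_def F_def\<close>)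
qed

lemma weighted_sum_sq_le:
  assumes bound: "\<forall>p<N. \<bar>a p\<bar> \<le> A"
  shows "(\<Sum>p<N. w p * a p)\<^sup>2 \<le> A\<^sup>2 * (real N * sqnorm N w)"
proof -
  have "\<bar>\<Sum>p<N. w p * a p\<bar> \<le> (\<Sum>p<N. \<bar>w p\<bar> * A)"
    using bound by (auto intro!: order_trans[OF sum_abs] sum_mono mult_left_mono simp: abs_mult)
  also have "\<dots> = A * (\<Sum>p<N. \<bar>w p\<bar>)" by (simp add: sum_distrib_left mult.commute)
  finally have "(\<Sum>p<N. w p * a p)\<^sup>2 \<le> (A * (\<Sum>p<N. \<bar>w p\<bar>))\<^sup>2"
    by (metis abs_ge_zero order_trans power2_abs power_mono)
  also have "\<dots> = A\<^sup>2 * (\<Sum>p<N. \<bar>w p\<bar>)\<^sup>2" by (simp add: power_mult_distrib)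
  also have "\<dots> \<le> A\<^sup>2 * (real N * sqnorm N w)"
    using sum_squared_le_sum_of_squares[of "\<lambda>p. \<bar>w p\<bar>" "{..<N}"]
    unfolding sqnorm_def by (intro mult_left_mono) (auto simp: mult.commute)
  finally show ?thesis .
qed

lemma avar_nonneg: "\<forall>y. fX y \<ge> 0 \<Longrightarrow> 0 \<le> avar K sig fX x"
  unfolding avar_def by (simp add: Bochner_Integration.integral_nonneg)

lemma opt_weights_variance_bounds:
  fixes fe Finv :: "real \<Rightarrow> real" and nb :: "nat \<Rightarrow> nat" and tau :: "nat \<Rightarrow> nat \<Rightarrow> real"
    and w :: "real Matrix.vec"
  assumes J: "J \<ge> 1" and m: "m \<ge> 1" and nb: "\<forall>i\<in>{1..m}. nb i > 0" and \<alpha>: "\<alpha> > 0"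
    and lmin: "0 < lmin"
    and eig: "\<forall>i e. i \<in> {1..m} \<longrightarrow> eigenvalue (R1mat fe Finv J tau i) e \<longrightarrow> lmin < e \<and> e < lmax"
    and w: "w = opt_weights fe Finv m J nb (bw \<alpha> \<nu> nb) tau"
    and sum_w: "(\<Sum>p<m * J. w $ p) = 1"
    and sum_wF: "(\<Sum>p<m * J. w $ p * Fvec Finv m J tau $ p) = 0"
    and choice: "(\<Sum>p<m * J. Fvec Finv m J tau $ p) = 0
       \<or> scalar_prod (ones (m * J)) (Sinv fe Finv m J nb (bw 1 \<nu> nb) tau *\<^sub>v Fvec Finv m J tau) = 0"
    and cl: "0 < cl" "\<forall>i\<in>{1..m}. cl \<le> block_factor \<alpha> \<nu> nb i"
    and ch: "\<forall>i\<in>{1..m}. block_factor \<alpha> \<nu> nb i \<le> ch"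
  shows "0 \<le> scalar_prod w (Smat fe Finv m J nb (bw \<alpha> \<nu> nb) tau *\<^sub>v w)"
    and "scalar_prod w (Smat fe Finv m J nb (bw \<alpha> \<nu> nb) tau *\<^sub>v w) \<le> lmax * ch / real (m * J)"
    and "real (m * J) * sqnorm (m * J) (\<lambda>p. w $ p) \<le> lmax * ch / (lmin * cl)"
proof -
  define N where "N = m * J"
  have N: "N > 0" unfolding N_def using J m by simp
  let ?S = "Smat fe Finv m J nb (bw \<alpha> \<nu> nb) tau"
  define Q where "Q = bilin N (\<lambda>p q. ?S $$ (p, q)) (\<lambda>p. w $ p) (\<lambda>p. w $ p)"
  note opt = opt_weights_bilin_le_uniform[OF J m nb \<alpha> lmin eig w sum_w sum_wF choice, folded N_def]
  have "scalar_prod w (?S *\<^sub>v w) = Q"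
    unfolding Q_def N_def using opt(1) Smat_carrier
    by (intro scalar_prod_mult_mat_vec_eq_bilin) (auto simp: N_def)
  moreover have "sqnorm N (\<lambda>p. 1 / real N) = 1 / real N" unfolding sqnorm_def using N
    by (simp add: power2_eq_square)
  then have Q_le: "Q \<le> lmax * ch / real N"
    using opt(2) Smat_bilin_upper[OF J less_imp_le[OF \<alpha>] lmin eig ch, of "\<lambda>p. 1 / real N"]
    unfolding Q_def N_def by simp
  moreover have Q_ge: "lmin * cl * sqnorm N (\<lambda>p. w $ p) \<le> Q"
    using Smat_bilin_lower[OF J less_imp_le[OF \<alpha>] lmin eig less_imp_le[OF cl(1)] cl(2)]
    unfolding Q_def N_def by simp
  moreover have "0 \<le> lmin * cl * sqnorm N (\<lambda>p. w $ p)"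
    using lmin cl sqnorm_nonneg by simp
  moreover have "real N * sqnorm N (\<lambda>p. w $ p) \<le> real N * (Q / (lmin * cl))"
    using Q_ge lmin cl by (intro mult_left_mono) (simp_all add: le_divide_eq mult.commute)
  moreover have "\<dots> \<le> real N * ((lmax * ch / real N) / (lmin * cl))"
    using Q_le lmin cl by (intro mult_left_mono divide_right_mono) auto
  ultimately show "0 \<le> scalar_prod w (?S *\<^sub>v w)" "scalar_prod w (?S *\<^sub>v w) \<le> lmax * ch / real (m * J)"
    "real (m * J) * sqnorm (m * J) (\<lambda>p. w $ p) \<le> lmax * ch / (lmin * cl)"
    using N unfolding N_def by auto
qed

lemma amse_le:
  fixes fe Finv :: "real \<Rightarrow> real" and nb :: "nat \<Rightarrow> nat" and tau :: "nat \<Rightarrow> nat \<Rightarrow> real"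
    and w :: "real Matrix.vec"
  assumes J: "J \<ge> 1" and m: "m \<ge> 1" and nb: "\<forall>i\<in>{1..m}. nb i > 0" and \<alpha>: "\<alpha> > 0"
    and lmin: "0 < lmin"
    and eig: "\<forall>i e. i \<in> {1..m} \<longrightarrow> eigenvalue (R1mat fe Finv J tau i) e \<longrightarrow> lmin < e \<and> e < lmax"
    and w: "w = opt_weights fe Finv m J nb (bw \<alpha> \<nu> nb) tau"
    and sum_w: "(\<Sum>p<m * J. w $ p) = 1"
    and sum_wF: "(\<Sum>p<m * J. w $ p * Fvec Finv m J tau $ p) = 0"
    and choice: "(\<Sum>p<m * J. Fvec Finv m J tau $ p) = 0
       \<or> scalar_prod (ones (m * J)) (Sinv fe Finv m J nb (bw 1 \<nu> nb) tau *\<^sub>v Fvec Finv m J tau) = 0"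
    and cl: "0 < cl" "\<forall>i\<in>{1..m}. cl \<le> block_factor \<alpha> \<nu> nb i"
    and ch: "\<forall>i\<in>{1..m}. block_factor \<alpha> \<nu> nb i \<le> ch"
    and hb: "\<forall>p<m * J. (stack m J (bw \<alpha> \<nu> nb) $ p)\<^sup>2 \<le> Hm"
    and bb: "\<forall>p<m * J. \<bar>beta K mreg sig Finv x (stack m J tau $ p)\<bar> \<le> Bm"
    and av: "0 \<le> avar K sig fX x"
  shows "0 \<le> amse K mreg sig fX fe Finv x m J nb (bw \<alpha> \<nu> nb) tau w"
    and "amse K mreg sig fX fe Finv x m J nb (bw \<alpha> \<nu> nb) tau w
          \<le> Hm\<^sup>2 * Bm\<^sup>2 * (lmax * ch / (lmin * cl)) + avar K sig fX x * (lmax * ch / real (m * J))"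
proof -
  note var = opt_weights_variance_bounds[OF J m nb \<alpha> lmin eig w sum_w sum_wF choice cl ch]
  let ?h = "\<lambda>p. stack m J (bw \<alpha> \<nu> nb) $ p" and ?b = "\<lambda>p. beta K mreg sig Finv x (stack m J tau $ p)"
  define B where "B = (\<Sum>p<m * J. w $ p * (?h p)\<^sup>2 * ?b p)"
  have "\<forall>p<m * J. \<bar>(?h p)\<^sup>2 * ?b p\<bar> \<le> Hm * Bm"
  proof (intro allI impI)
    fix p assume "p < m * J"
    then have "(?h p)\<^sup>2 \<le> Hm" "\<bar>?b p\<bar> \<le> Bm" using hb bb by auto
    then show "\<bar>(?h p)\<^sup>2 * ?b p\<bar> \<le> Hm * Bm"
      unfolding abs_mult by (intro mult_mono) (auto intro: order_trans[OF zero_le_power2])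
  qed
  then have "B\<^sup>2 \<le> (Hm * Bm)\<^sup>2 * (real (m * J) * sqnorm (m * J) (\<lambda>p. w $ p))"
    unfolding B_def using weighted_sum_sq_le[of "m * J" _ "Hm * Bm" "\<lambda>p. w $ p"] by (simp add: mult.assoc)
  also have "\<dots> \<le> Hm\<^sup>2 * Bm\<^sup>2 * (lmax * ch / (lmin * cl))"
    unfolding power_mult_distrib by (rule mult_left_mono[OF var(3)]) simp
  finally have bias: "B\<^sup>2 \<le> Hm\<^sup>2 * Bm\<^sup>2 * (lmax * ch / (lmin * cl))" .
  have amse: "amse K mreg sig fX fe Finv x m J nb (bw \<alpha> \<nu> nb) tau w
      = B\<^sup>2 + avar K sig fX x * scalar_prod w (Smat fe Finv m J nb (bw \<alpha> \<nu> nb) tau *\<^sub>v w)"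
    unfolding amse_def Let_def B_def by simp
  show "0 \<le> amse K mreg sig fX fe Finv x m J nb (bw \<alpha> \<nu> nb) tau w"
    unfolding amse using av var(1) by simp
  show "amse K mreg sig fX fe Finv x m J nb (bw \<alpha> \<nu> nb) tau w
          \<le> Hm\<^sup>2 * Bm\<^sup>2 * (lmax * ch / (lmin * cl)) + avar K sig fX x * (lmax * ch / real (m * J))"
    unfolding amse using add_mono[OF bias mult_left_mono[OF var(2) av]] by simp
qed

section \<open>Boundedness of the error quantiles\<close>

lemma cdf_diff_eq_integral:
  fixes fe Fe :: "real \<Rightarrow> real"
  assumes cdf: "\<forall>t. Fe t = (LINT u:{..t}|lborel. fe u)" and int: "integrable lborel fe"
    and ab: "a \<le> b"
  shows "Fe b - Fe a = (\<integral>u. fe u * indicator {a<..b} u \<partial>lborel)"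
proof -
  have cdf': "Fe t = (\<integral>u. fe u * indicator {..t} u \<partial>lborel)" for t
    using cdf unfolding set_lebesgue_integral_def by (simp add: mult.commute)
  have int_le: "integrable lborel (\<lambda>u. fe u * indicator {..t} u)" for t
    by (auto intro: integrable_real_mult_indicator int)
  have "Fe b - Fe a = (\<integral>u. fe u * indicator {..b} u - fe u * indicator {..a} u \<partial>lborel)"
    unfolding cdf' using Bochner_Integration.integral_diff[OF int_le[of b] int_le[of a]] by simp
  also have "\<dots> = (\<integral>u. fe u * indicator {a<..b} u \<partial>lborel)"
    using ab by (intro Bochner_Integration.integral_cong refl) (auto simp: indicator_def)
  finally show ?thesis .
qed

lemma integral_Ioc_lower_bound:
  fixes f :: "real \<Rightarrow> real"
  assumes int: "integrable lborel f" and ab: "a \<le> b" and lower: "\<And>u. a \<le> u \<Longrightarrow> u \<le> b \<Longrightarrow> c \<le> f u"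
  shows "c * (b - a) \<le> (\<integral>u. f u * indicator {a<..b} u \<partial>lborel)"
proof -
  have "c * (b - a) = (\<integral>u. c * indicator {a<..b} u \<partial>lborel)" using ab by simp
  also have "\<dots> \<le> (\<integral>u. f u * indicator {a<..b} u \<partial>lborel)"
    using ab lower
    by (intro integral_mono integrable_mult_right integrable_real_indicator
        integrable_real_mult_indicator int) (auto simp: indicator_def)
  finally show ?thesis .
qed

lemma integral_Ioc_upper_bound:
  fixes f :: "real \<Rightarrow> real"
  assumes int: "integrable lborel f" and ab: "a \<le> b" and upper: "\<And>u. a \<le> u \<Longrightarrow> u \<le> b \<Longrightarrow> f u \<le> C"
  shows "(\<integral>u. f u * indicator {a<..b} u \<partial>lborel) \<le> C * (b - a)"
proof -
  have "(\<integral>u. f u * indicator {a<..b} u \<partial>lborel) \<le> (\<integral>u. C * indicator {a<..b} u \<partial>lborel)"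
    using ab upper
    by (intro integral_mono integrable_mult_right integrable_real_indicator
        integrable_real_mult_indicator int) (auto simp: indicator_def)
  also have "\<dots> = C * (b - a)" using ab by simp
  finally show ?thesis .
qed

lemma cdf_chebyshev_tails:
  fixes fe Fe :: "real \<Rightarrow> real"
  assumes cdf: "\<forall>t. Fe t = (LINT u:{..t}|lborel. fe u)" and int: "integrable lborel fe"
    and total: "(LINT u|lborel. fe u) = 1" and pos: "\<forall>t. fe t > 0"
    and int_m2: "integrable lborel (\<lambda>u. u\<^sup>2 * fe u)" and m2: "(LINT u|lborel. u\<^sup>2 * fe u) = 1"
    and a: "a > 0"
  shows "Fe (- a) \<le> 1 / a\<^sup>2" and "1 - Fe a \<le> 1 / a\<^sup>2"
proof -
  have cdf': "Fe t = (\<integral>u. fe u * indicator {..t} u \<partial>lborel)" for t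
    using cdf unfolding set_lebesgue_integral_def by (simp add: mult.commute)
  have int_le: "integrable lborel (\<lambda>u. fe u * indicator {..t} u)" for t
    by (auto intro: integrable_real_mult_indicator int)
  have int_m2': "integrable lborel (\<lambda>u. u\<^sup>2 * fe u / a\<^sup>2)"
    using int_m2 by (rule integrable_divide)
  have tail: "fe u \<le> u\<^sup>2 * fe u / a\<^sup>2" if "a \<le> \<bar>u\<bar>" for u
  proof -
    have "a\<^sup>2 \<le> u\<^sup>2" using that a by (metis abs_le_square_iff abs_of_pos)
    then show ?thesis using pos a by (simp add: le_divide_eq mult.commute mult_left_mono)
  qed
  have moment_nonneg: "0 \<le> u\<^sup>2 * fe u / a\<^sup>2" for u using pos[rule_format, of u] by simp
  have "Fe (- a) \<le> (\<integral>u. u\<^sup>2 * fe u / a\<^sup>2 \<partial>lborel)"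
    unfolding cdf' using a tail moment_nonneg
    by (intro integral_mono int_le int_m2') (auto simp: indicator_def)
  then show "Fe (- a) \<le> 1 / a\<^sup>2" using m2 by simp
  have "1 - Fe a = (\<integral>u. fe u - fe u * indicator {..a} u \<partial>lborel)"
    unfolding cdf' using Bochner_Integration.integral_diff[OF int int_le[of a]] total by simp
  also have "\<dots> \<le> (\<integral>u. u\<^sup>2 * fe u / a\<^sup>2 \<partial>lborel)"
    using a tail moment_nonneg
    by (intro integral_mono Bochner_Integration.integrable_diff int int_le int_m2')
      (auto simp: indicator_def)
  finally show "1 - Fe a \<le> 1 / a\<^sup>2" using m2 by simp
qed

lemma cdf_strict_mono:
  fixes fe Fe :: "real \<Rightarrow> real"
  assumes cdf: "\<forall>t. Fe t = (LINT u:{..t}|lborel. fe u)" and int: "integrable lborel fe"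
    and pos: "\<forall>t. fe t > 0" and cont: "continuous_on UNIV fe"
  shows "strict_mono Fe"
proof
  fix x y :: real assume xy: "x < y"
  obtain z where "z \<in> {x..y}" and zmin: "\<forall>u\<in>{x..y}. fe z \<le> fe u"
    using continuous_attains_inf[of "{x..y}" fe] xy continuous_on_subset[OF cont] by auto
  have "fe z * (y - x) \<le> Fe y - Fe x"
    using integral_Ioc_lower_bound[OF int _ zmin[rule_format]] cdf_diff_eq_integral[OF cdf int] xy
    by simp
  moreover have "fe z * (y - x) > 0" using pos xy by simp
  ultimately show "Fe x < Fe y" by linarith
qed

lemma cdf_continuous_on_interval:
  fixes fe Fe :: "real \<Rightarrow> real"
  assumes cdf: "\<forall>t. Fe t = (LINT u:{..t}|lborel. fe u)" and int: "integrable lborel fe"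
    and pos: "\<forall>t. fe t > 0" and cont: "continuous_on UNIV fe"
  shows "continuous_on {a..b} Fe"
proof -
  obtain C where C: "\<forall>u\<in>{a..b}. fe u \<le> C"
    using continuous_attains_sup[of "{a..b}" fe] continuous_on_subset[OF cont]
    by (cases "a \<le> b") auto
  have incr: "0 \<le> Fe q - Fe p \<and> Fe q - Fe p \<le> C * (q - p)"
    if "p \<le> q" "p \<in> {a..b}" "q \<in> {a..b}" for p q
  proof
    show "0 \<le> Fe q - Fe p"
      using that(1) cdf_strict_mono[OF cdf int pos cont] by (simp add: strict_mono_less_eq)
    show "Fe q - Fe p \<le> C * (q - p)"
      using integral_Ioc_upper_bound[OF int that(1), of C] C that
        cdf_diff_eq_integral[OF cdf int that(1)] by auto
  qed
  have "\<bar>C\<bar>-lipschitz_on {a..b} Fe"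
  proof (rule lipschitz_onI)
    fix x y assume "x \<in> {a..b}" "y \<in> {a..b}"
    then show "dist (Fe x) (Fe y) \<le> \<bar>C\<bar> * dist x y"
      using incr[of x y] incr[of y x] unfolding dist_real_def
      by (cases "x \<le> y") (auto intro: order_trans[OF _ mult_right_mono[OF abs_ge_self]])
  qed simp
  then show ?thesis by (rule lipschitz_on_continuous_on)
qed

lemma qinv_bounded:
  fixes fe Fe :: "real \<Rightarrow> real"
  assumes cdf: "\<forall>t. Fe t = (LINT u:{..t}|lborel. fe u)" and int: "integrable lborel fe"
    and total: "(LINT u|lborel. fe u) = 1" and pos: "\<forall>t. fe t > 0"
    and cont: "continuous_on UNIV fe"
    and int_m2: "integrable lborel (\<lambda>u. u\<^sup>2 * fe u)" and m2: "(LINT u|lborel. u\<^sup>2 * fe u) = 1"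
    and \<delta>: "\<delta> > 0"
  shows "\<exists>C. \<forall>\<tau>. \<delta> < \<tau> \<and> \<tau> < 1 - \<delta> \<longrightarrow> \<bar>qinv Fe \<tau>\<bar> \<le> C"
proof (intro exI allI impI)
  fix \<tau> assume \<tau>: "\<delta> < \<tau> \<and> \<tau> < 1 - \<delta>"
  \<comment> \<open>Chebyshev: at a = sqrt (2 / \<delta>) both tails have mass at most \<delta> / 2\<close>
  define a where "a = sqrt (2 / \<delta>)"
  have a: "a > 0" and a2: "1 / a\<^sup>2 = \<delta> / 2" unfolding a_def using \<delta> by simp_all
  have "Fe (- a) \<le> \<delta> / 2" "1 - Fe a \<le> \<delta> / 2"
    using cdf_chebyshev_tails[OF cdf int total pos int_m2 m2 a] a2 by auto
  with \<tau> \<delta> have "Fe (- a) \<le> \<tau>" "\<tau> \<le> Fe a" by auto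
  then obtain q where q: "-a \<le> q" "q \<le> a" "Fe q = \<tau>"
    using IVT'[of Fe "-a" \<tau> a] cdf_continuous_on_interval[OF cdf int pos cont] a by auto
  have "qinv Fe \<tau> = q"
    unfolding qinv_def using q(3) strict_mono_eq[OF cdf_strict_mono[OF cdf int pos cont]]
    by blast
  then show "\<bar>qinv Fe \<tau>\<bar> \<le> a" using q by simp
qed

lemma batch_size_log_bounds:
  fixes nb :: "nat \<Rightarrow> nat"
  assumes m: "m \<ge> 1" and Mb: "Mb > 0"
    and sizes: "\<forall>i\<in>{1..m}. Mb powr (-2) * real n powr s < real (nb i) \<and> real (nb i) < Mb\<^sup>2 * real n powr s"
    and n: "n = (\<Sum>i = 1..m. nb i)"
  shows "n > 0" and "Mb > 1" and "\<forall>i\<in>{1..m}. nb i > 0"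
    and "\<forall>i\<in>{1..m}. - 2 * ln Mb + s * ln n < ln (nb i) \<and> ln (nb i) < 2 * ln Mb + s * ln n"
    and "(1 - s) * ln n - 2 * ln Mb < ln m" and "ln m < (1 - s) * ln n + 2 * ln Mb"
proof -
  have one: "1 \<in> {1..m}" using m by simp
  show n0: "n > 0"
  proof (rule ccontr)
    assume "\<not> n > 0"
    then show False using sizes one by auto
  qed
  have lo_pos: "0 < Mb powr (-2) * real n powr s" and hi_pos: "0 < Mb\<^sup>2 * real n powr s"
    using Mb n0 by simp_all
  show nb_pos: "\<forall>i\<in>{1..m}. nb i > 0" using sizes lo_pos by force
  show "Mb > 1"
  proof (rule ccontr)
    assume "\<not> Mb > 1"
    then have "Mb\<^sup>2 \<le> 1" using Mb by (simp add: power_le_one)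
    then have "Mb\<^sup>2 \<le> Mb powr (-2)"
      using Mb by (simp add: powr_minus powr_numeral one_le_inverse order_trans)
    then have "Mb\<^sup>2 * real n powr s \<le> Mb powr (-2) * real n powr s" using n0 by simp
    then show False using sizes one by fastforce
  qed
  have ln_lo: "ln (Mb powr (-2) * real n powr s) = - 2 * ln Mb + s * ln n"
    and ln_hi: "ln (Mb\<^sup>2 * real n powr s) = 2 * ln Mb + s * ln n"
    using Mb n0 by (simp_all add: ln_mult ln_powr ln_realpow)
  show "\<forall>i\<in>{1..m}. - 2 * ln Mb + s * ln n < ln (nb i) \<and> ln (nb i) < 2 * ln Mb + s * ln n"
    unfolding ln_lo[symmetric] ln_hi[symmetric] using sizes nb_pos lo_pos hi_pos by simp
  have "real m * (Mb powr (-2) * real n powr s) < real n \<and> real n < real m * (Mb\<^sup>2 * real n powr s)"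
  proof -
    define lo hi where "lo = Mb powr (-2) * real n powr s" and "hi = Mb\<^sup>2 * real n powr s"
    have "(\<Sum>i=1..m. lo) < (\<Sum>i=1..m. real (nb i))"
      by (rule sum_strict_mono) (use one sizes in \<open>auto simp: lo_def\<close>)
    moreover have "(\<Sum>i=1..m. real (nb i)) < (\<Sum>i=1..m. hi)"
      by (rule sum_strict_mono) (use one sizes in \<open>auto simp: hi_def\<close>)
    moreover have "real n = (\<Sum>i=1..m. real (nb i))" unfolding n by simp
    ultimately show ?thesis unfolding lo_def[symmetric] hi_def[symmetric] by simp
  qed
  then have "ln (real m * (Mb powr (-2) * real n powr s)) < ln n"
    and "ln n < ln (real m * (Mb\<^sup>2 * real n powr s))"
    using m lo_pos hi_pos n0 by simp_all
  moreover have "ln (real m * (Mb powr (-2) * real n powr s)) = ln m + (- 2 * ln Mb + s * ln n)"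
    and "ln (real m * (Mb\<^sup>2 * real n powr s)) = ln m + (2 * ln Mb + s * ln n)"
    using m lo_pos hi_pos by (simp_all only: ln_mult_pos ln_lo ln_hi of_nat_0_less_iff)
  ultimately have "ln m + (- 2 * ln Mb + s * ln n) < ln n" and "ln n < ln m + (2 * ln Mb + s * ln n)"
    by simp_all
  then show "(1 - s) * ln n - 2 * ln Mb < ln m" and "ln m < (1 - s) * ln n + 2 * ln Mb"
    by (simp_all add: algebra_simps)
qed

lemma stack_all:
  assumes "\<forall>i\<in>{1..m}. \<forall>j\<in>{1..J}. P (g i j)"
  shows "\<forall>p<m * J. P (stack m J g $ p)"
proof (intro allI impI)
  fix p assume p: "p < m * J"
  then have "J > 0" by (cases "J = 0") auto
  then have "p div J + 1 \<in> {1..m}" "p mod J + 1 \<in> {1..J}"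
    using p by (auto simp: div_less_iff_less_mult Suc_leI)
  then show "P (stack m J g $ p)" unfolding stack_def using assms p by simp
qed

lemma block_factor_exp_bounds:
  assumes \<alpha>: "\<alpha> > 0" and nb: "nb i > 0" and \<nu>: "\<nu> < 1"
    and size: "- 2 * L + s * \<Lambda> < ln (nb i)" "ln (nb i) < 2 * L + s * \<Lambda>"
  shows "exp ((\<nu> - 1) * (2 * L + s * \<Lambda>)) / \<alpha> \<le> block_factor \<alpha> \<nu> nb i"
    and "block_factor \<alpha> \<nu> nb i \<le> exp ((\<nu> - 1) * (- 2 * L + s * \<Lambda>)) / \<alpha>"
proof -
  have "real (nb i) * (\<alpha> * real (nb i) powr (- \<nu>)) = \<alpha> * (exp (ln (nb i)) * exp (- \<nu> * ln (nb i)))"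
    using nb by (simp add: powr_def)
  also have "\<dots> = \<alpha> * exp ((1 - \<nu>) * ln (nb i))" by (simp add: exp_add[symmetric] algebra_simps)
  moreover have "exp ((\<nu> - 1) * ln (nb i)) = inverse (exp ((1 - \<nu>) * ln (nb i)))"
    by (simp add: exp_minus[symmetric] algebra_simps)
  ultimately have bf: "block_factor \<alpha> \<nu> nb i = exp ((\<nu> - 1) * ln (nb i)) / \<alpha>"
    unfolding block_factor_def using \<alpha> by (simp add: field_simps)
  show "exp ((\<nu> - 1) * (2 * L + s * \<Lambda>)) / \<alpha> \<le> block_factor \<alpha> \<nu> nb i"
    unfolding bf using \<alpha> \<nu> size by (intro divide_right_mono) (auto intro!: mult_left_mono_neg)
  show "block_factor \<alpha> \<nu> nb i \<le> exp ((\<nu> - 1) * (- 2 * L + s * \<Lambda>)) / \<alpha>"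
    unfolding bf using \<alpha> \<nu> size by (intro divide_right_mono) (auto intro!: mult_left_mono_neg)
qed

lemma bw_sq_exp_bound:
  assumes nb: "nb i > 0" and \<nu>: "0 < \<nu>" and size: "- 2 * L + s * \<Lambda> < ln (nb i)"
  shows "(bw \<alpha> \<nu> nb i j)\<^sup>2 \<le> \<alpha>\<^sup>2 * exp (- 2 * \<nu> * (- 2 * L + s * \<Lambda>))"
proof -
  have "(bw \<alpha> \<nu> nb i j)\<^sup>2 = \<alpha>\<^sup>2 * exp (- 2 * \<nu> * ln (nb i))"
    unfolding bw_def using nb
    by (simp add: powr_def power_mult_distrib power2_eq_square exp_add[symmetric] algebra_simps)
  also have "\<dots> \<le> \<alpha>\<^sup>2 * exp (- 2 * \<nu> * (- 2 * L + s * \<Lambda>))"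
    using \<nu> size by (intro mult_left_mono) auto
  finally show ?thesis .
qed

lemma design_exp_bounds:
  assumes \<alpha>: "\<alpha> > 0" and \<nu>: "0 < \<nu>" "\<nu> < 1" and nb: "\<forall>i\<in>{1..m}. nb i > 0"
    and size: "\<forall>i\<in>{1..m}. - 2 * L + s * \<Lambda> < ln (nb i) \<and> ln (nb i) < 2 * L + s * \<Lambda>"
  shows "\<forall>i\<in>{1..m}. exp ((\<nu> - 1) * (2 * L + s * \<Lambda>)) / \<alpha> \<le> block_factor \<alpha> \<nu> nb i"
    and "\<forall>i\<in>{1..m}. block_factor \<alpha> \<nu> nb i \<le> exp ((\<nu> - 1) * (- 2 * L + s * \<Lambda>)) / \<alpha>"
    and "\<forall>p<m * J. (stack m J (bw \<alpha> \<nu> nb) $ p)\<^sup>2 \<le> \<alpha>\<^sup>2 * exp (- 2 * \<nu> * (- 2 * L + s * \<Lambda>))"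
proof -
  have i: "nb i > 0" "- 2 * L + s * \<Lambda> < ln (nb i)" "ln (nb i) < 2 * L + s * \<Lambda>" if "i \<in> {1..m}" for i
    using nb size that by auto
  show "\<forall>i\<in>{1..m}. exp ((\<nu> - 1) * (2 * L + s * \<Lambda>)) / \<alpha> \<le> block_factor \<alpha> \<nu> nb i"
    using block_factor_exp_bounds(1)[where nb = nb, OF \<alpha> i(1) \<nu>(2) i(2,3)] by blast
  show "\<forall>i\<in>{1..m}. block_factor \<alpha> \<nu> nb i \<le> exp ((\<nu> - 1) * (- 2 * L + s * \<Lambda>)) / \<alpha>"
    using block_factor_exp_bounds(2)[where nb = nb, OF \<alpha> i(1) \<nu>(2) i(2,3)] by blast
  show "\<forall>p<m * J. (stack m J (bw \<alpha> \<nu> nb) $ p)\<^sup>2 \<le> \<alpha>\<^sup>2 * exp (- 2 * \<nu> * (- 2 * L + s * \<Lambda>))"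
    using bw_sq_exp_bound[where nb = nb, OF i(1) \<nu>(1) i(2)] by (intro stack_all) blast
qed

lemma bias_term_exp_bound:
  fixes \<alpha> L \<nu> s \<Lambda> lmin lmax Bm :: real
  assumes \<alpha>: "\<alpha> > 0" and L: "L \<ge> 0" and \<nu>: "\<nu> \<le> 1" and lmin: "lmin > 0" and lmax: "lmax \<ge> 0"
  shows "(\<alpha>\<^sup>2 * exp (- 2 * \<nu> * (- 2 * L + s * \<Lambda>)))\<^sup>2 * Bm\<^sup>2
      * (lmax * (exp ((\<nu> - 1) * (- 2 * L + s * \<Lambda>)) / \<alpha>)
         / (lmin * (exp ((\<nu> - 1) * (2 * L + s * \<Lambda>)) / \<alpha>)))
    \<le> (Bm\<^sup>2 * lmax / lmin * \<alpha> ^ 4 * exp (8 * L)) * exp (- 4 * s * \<nu> * \<Lambda>)"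
proof -
  have "(\<alpha>\<^sup>2 * exp (- 2 * \<nu> * (- 2 * L + s * \<Lambda>)))\<^sup>2 * Bm\<^sup>2
      * (lmax * (exp ((\<nu> - 1) * (- 2 * L + s * \<Lambda>)) / \<alpha>)
         / (lmin * (exp ((\<nu> - 1) * (2 * L + s * \<Lambda>)) / \<alpha>)))
    = (Bm\<^sup>2 * lmax / lmin * \<alpha> ^ 4) * exp (4 * L + 4 * \<nu> * L - 4 * s * \<nu> * \<Lambda>)"
    using \<alpha> lmin
    by (simp add: power_mult_distrib exp_add[symmetric] exp_diff power2_eq_square field_simps
        numeral_eq_Suc algebra_simps)
  also have "\<dots> \<le> (Bm\<^sup>2 * lmax / lmin * \<alpha> ^ 4) * exp (8 * L - 4 * s * \<nu> * \<Lambda>)"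
    using \<alpha> lmin lmax L \<nu> mult_right_mono[OF \<nu> L] by (intro mult_left_mono) auto
  also have "\<dots> = (Bm\<^sup>2 * lmax / lmin * \<alpha> ^ 4 * exp (8 * L)) * exp (- 4 * s * \<nu> * \<Lambda>)"
    by (simp add: exp_diff exp_minus field_simps)
  finally show ?thesis .
qed

lemma variance_term_exp_bound:
  fixes \<alpha> L \<nu> s \<Lambda> lmax a :: real
  assumes \<alpha>: "\<alpha> > 0" and L: "L \<ge> 0" and \<nu>: "0 \<le> \<nu>" and J: "J \<ge> 1" and av: "0 \<le> a" and lmax: "0 \<le> lmax"
    and m: "exp ((1 - s) * \<Lambda> - 2 * L) < real m"
  shows "a * (lmax * (exp ((\<nu> - 1) * (- 2 * L + s * \<Lambda>)) / \<alpha>) / real (m * J))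
    \<le> (a * lmax * exp (4 * L) / \<alpha>) * exp ((s * \<nu> - 1) * \<Lambda>)"
proof -
  let ?ch = "exp ((\<nu> - 1) * (- 2 * L + s * \<Lambda>)) / \<alpha>"
  have m0: "0 < real m" using m by (meson exp_gt_zero less_trans)
  have "m \<le> m * J" using J by simp
  then have "real m \<le> real (m * J)" by (rule of_nat_mono)
  then have "?ch / real (m * J) \<le> ?ch / real m"
    using \<alpha> m0 by (intro divide_left_mono) auto
  also have "\<dots> \<le> ?ch / exp ((1 - s) * \<Lambda> - 2 * L)"
    using \<alpha> m m0 by (intro divide_left_mono) auto
  also have "\<dots> = exp ((\<nu> - 1) * (- 2 * L + s * \<Lambda>) - ((1 - s) * \<Lambda> - 2 * L)) / \<alpha>"
    by (simp add: exp_diff)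
  also have "\<dots> \<le> exp (4 * L + (s * \<nu> - 1) * \<Lambda>) / \<alpha>"
    using \<alpha> mult_nonneg_nonneg[OF \<nu> L] by (intro divide_right_mono) (auto simp: algebra_simps)
  also have "\<dots> = exp (4 * L) / \<alpha> * exp ((s * \<nu> - 1) * \<Lambda>)" by (simp add: exp_add)
  finally have ch: "?ch / real (m * J) \<le> exp (4 * L) / \<alpha> * exp ((s * \<nu> - 1) * \<Lambda>)" .
  show ?thesis
    using mult_left_mono[OF ch mult_nonneg_nonneg[OF av lmax]] by (simp add: mult_ac)
qed

section \<open>Rate of the AMSE\<close>

lemma beta_abs_le:
  assumes "\<bar>Finv t\<bar> \<le> C"
  shows "\<bar>beta K mreg sig Finv x t\<bar>
    \<le> \<bar>mu2 K\<bar> / 2 * (\<bar>deriv (deriv mreg) x\<bar> + \<bar>deriv (deriv sig) x\<bar> * C)"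
proof -
  have "\<bar>deriv (deriv mreg) x + deriv (deriv sig) x * Finv t\<bar>
      \<le> \<bar>deriv (deriv mreg) x\<bar> + \<bar>deriv (deriv sig) x\<bar> * C"
    using assms by (metis abs_mult abs_triangle_ineq abs_ge_zero add_left_mono mult_left_mono order_trans)
  moreover have "\<bar>beta K mreg sig Finv x t\<bar>
      = \<bar>mu2 K\<bar> / 2 * \<bar>deriv (deriv mreg) x + deriv (deriv sig) x * Finv t\<bar>"
    unfolding beta_def by (simp add: abs_mult)
  ultimately show ?thesis by (simp add: mult_left_mono)
qed

lemma exp_mult_ln: "0 < x \<Longrightarrow> exp (a * ln x) = x powr (a :: real)"
  by (simp add: powr_def)

lemma amse_le_rate:
  fixes fe Finv :: "real \<Rightarrow> real" and nb :: "nat \<Rightarrow> nat" and tau :: "nat \<Rightarrow> nat \<Rightarrow> real"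
    and w :: "real Matrix.vec"
  assumes J: "J \<ge> 1" and m: "m \<ge> 1" and \<alpha>: "\<alpha> > 0" and lmin: "0 < lmin" and lmax: "lmin < lmax"
    and eig: "\<forall>i e. i \<in> {1..m} \<longrightarrow> eigenvalue (R1mat fe Finv J tau i) e \<longrightarrow> lmin < e \<and> e < lmax"
    and w: "w = opt_weights fe Finv m J nb (bw \<alpha> \<nu> nb) tau"
    and sum_w: "(\<Sum>p<m * J. w $ p) = 1"
    and sum_wF: "(\<Sum>p<m * J. w $ p * Fvec Finv m J tau $ p) = 0"
    and choice: "(\<Sum>p<m * J. Fvec Finv m J tau $ p) = 0
       \<or> scalar_prod (ones (m * J)) (Sinv fe Finv m J nb (bw 1 \<nu> nb) tau *\<^sub>v Fvec Finv m J tau) = 0"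
    and bb: "\<forall>p<m * J. \<bar>beta K mreg sig Finv x (stack m J tau $ p)\<bar> \<le> Bm"
    and av: "0 \<le> avar K sig fX x"
    and Mb: "Mb > 0"
    and sizes: "\<forall>i\<in>{1..m}. Mb powr (-2) * real n powr s < real (nb i) \<and> real (nb i) < Mb\<^sup>2 * real n powr s"
    and n: "n = (\<Sum>i = 1..m. nb i)"
    and \<nu>: "0 < \<nu>" "\<nu> < 1"
  shows "0 \<le> amse K mreg sig fX fe Finv x m J nb (bw \<alpha> \<nu> nb) tau w"
    and "amse K mreg sig fX fe Finv x m J nb (bw \<alpha> \<nu> nb) tau w
      \<le> (Bm\<^sup>2 * lmax / lmin * \<alpha> ^ 4 * Mb ^ 8) * real n powr (- 4 * s * \<nu>)
        + (avar K sig fX x * lmax * Mb ^ 4 / \<alpha>) * real n powr (s * \<nu> - 1)"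
proof -
  note size = batch_size_log_bounds[OF m Mb sizes n]
  define L \<Lambda> where "L = ln Mb" and "\<Lambda> = ln (real n)"
  have L: "L \<ge> 0" unfolding L_def using size(2) by simp
  have "\<forall>i\<in>{1..m}. - 2 * L + s * \<Lambda> < ln (nb i) \<and> ln (nb i) < 2 * L + s * \<Lambda>"
    using size(4) unfolding L_def \<Lambda>_def .
  note design = design_exp_bounds[OF \<alpha> \<nu> size(3) this]
  have "0 < exp ((\<nu> - 1) * (2 * L + s * \<Lambda>)) / \<alpha>" using \<alpha> by simp
  note bound = amse_le[OF J m size(3) \<alpha> lmin eig w sum_w sum_wF choice this design bb av]
  show "0 \<le> amse K mreg sig fX fe Finv x m J nb (bw \<alpha> \<nu> nb) tau w"
    by (rule bound(1))
  have "exp ((1 - s) * \<Lambda> - 2 * L) < exp (ln (real m))"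
    using size(5) unfolding L_def \<Lambda>_def by simp
  then have mlow: "exp ((1 - s) * \<Lambda> - 2 * L) < real m" using m by simp
  have exp_bound: "amse K mreg sig fX fe Finv x m J nb (bw \<alpha> \<nu> nb) tau w
      \<le> (Bm\<^sup>2 * lmax / lmin * \<alpha> ^ 4 * exp (8 * L)) * exp (- 4 * s * \<nu> * \<Lambda>)
        + (avar K sig fX x * lmax * exp (4 * L) / \<alpha>) * exp ((s * \<nu> - 1) * \<Lambda>)"
    using bound(2) bias_term_exp_bound[OF \<alpha> L less_imp_le[OF \<nu>(2)] lmin, of lmax s \<Lambda> Bm]
      variance_term_exp_bound[OF \<alpha> L less_imp_le[OF \<nu>(1)] J av _ mlow, of lmax] lmin lmax
    by (simp add: mult.assoc)
  have "exp (8 * L) = Mb ^ 8" "exp (4 * L) = Mb ^ 4"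
    unfolding L_def using Mb by (simp_all add: exp_mult_ln powr_numeral)
  moreover have "exp (- 4 * s * \<nu> * \<Lambda>) = real n powr (- 4 * s * \<nu>)"
    unfolding \<Lambda>_def by (rule exp_mult_ln) (use size(1) in simp)
  moreover have "exp ((s * \<nu> - 1) * \<Lambda>) = real n powr (s * \<nu> - 1)"
    unfolding \<Lambda>_def by (rule exp_mult_ln) (use size(1) in simp)
  ultimately show "amse K mreg sig fX fe Finv x m J nb (bw \<alpha> \<nu> nb) tau w
      \<le> (Bm\<^sup>2 * lmax / lmin * \<alpha> ^ 4 * Mb ^ 8) * real n powr (- 4 * s * \<nu>)
        + (avar K sig fX x * lmax * Mb ^ 4 / \<alpha>) * real n powr (s * \<nu> - 1)"
    using exp_bound by simp
qed

text \<open>With this choice of \<nu>, \<nu> (ln n - ln m) = ln n / 5, while ln n - ln m differs from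
  s ln n by less than 2 ln Mb; hence s \<nu> ln n = ln n / 5 up to an additive 2 ln Mb.\<close>
lemma optimal_nu_rates:
  fixes nb :: "nat \<Rightarrow> nat"
  assumes m: "m \<ge> 1" and Mb: "Mb > 0"
    and sizes: "\<forall>i\<in>{1..m}. Mb powr (-2) * real n powr s < real (nb i) \<and> real (nb i) < Mb\<^sup>2 * real n powr s"
    and n: "n = (\<Sum>i = 1..m. nb i)"
    and \<nu>: "\<nu> = ln n / (5 * (ln n - ln m))" "0 < \<nu>" "\<nu> < 1"
  shows "real n powr (- 4 * s * \<nu>) \<le> Mb ^ 8 * real n powr (- 4 / 5)"
    and "real n powr (s * \<nu> - 1) \<le> Mb\<^sup>2 * real n powr (- 4 / 5)"
proof -
  note size = batch_size_log_bounds[OF m Mb sizes n]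
  define L \<Lambda> D where "L = ln Mb" and "\<Lambda> = ln (real n)" and "D = \<Lambda> - ln m"
  have L: "0 \<le> L" unfolding L_def using size(2) by simp
  have "D \<noteq> 0" using \<nu> unfolding D_def \<Lambda>_def by auto
  moreover have "\<nu> = \<Lambda> / (5 * D)" unfolding D_def \<Lambda>_def by (rule \<nu>(1))
  ultimately have \<nu>D: "\<nu> * D = \<Lambda> / 5" by simp
  have D: "s * \<Lambda> - 2 * L < D" "D < s * \<Lambda> + 2 * L"
    using size(5,6) unfolding D_def L_def \<Lambda>_def by (simp_all add: algebra_simps)
  have "\<nu> * (D - s * \<Lambda>) \<le> \<nu> * (2 * L)" "\<nu> * (s * \<Lambda> - D) \<le> \<nu> * (2 * L)"
    using D \<nu>(2) by (intro mult_left_mono; simp)+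
  moreover have "\<nu> * (2 * L) \<le> 1 * (2 * L)" using \<nu>(3) L by (intro mult_right_mono) auto
  ultimately have "\<Lambda> / 5 - s * \<nu> * \<Lambda> \<le> 2 * L" "s * \<nu> * \<Lambda> - \<Lambda> / 5 \<le> 2 * L"
    using \<nu>D by (simp_all add: algebra_simps)
  then have "- 4 * s * \<nu> * \<Lambda> \<le> 8 * L + (- 4 / 5) * \<Lambda>" "(s * \<nu> - 1) * \<Lambda> \<le> 2 * L + (- 4 / 5) * \<Lambda>"
    by (simp_all add: algebra_simps)
  then have "exp (- 4 * s * \<nu> * \<Lambda>) \<le> exp (8 * L) * exp ((- 4 / 5) * \<Lambda>)"
    "exp ((s * \<nu> - 1) * \<Lambda>) \<le> exp (2 * L) * exp ((- 4 / 5) * \<Lambda>)"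
    by (simp_all add: exp_add[symmetric])
  moreover have "exp (a * \<Lambda>) = real n powr a" for a
    unfolding \<Lambda>_def by (rule exp_mult_ln) (use size(1) in simp)
  moreover have "exp (8 * L) = Mb ^ 8" "exp (2 * L) = Mb\<^sup>2"
    unfolding L_def using Mb by (simp_all add: exp_mult_ln powr_numeral)
  ultimately show "real n powr (- 4 * s * \<nu>) \<le> Mb ^ 8 * real n powr (- 4 / 5)"
    and "real n powr (s * \<nu> - 1) \<le> Mb\<^sup>2 * real n powr (- 4 / 5)"
    by (metis mult.assoc)+
qed

text \<open>This is where the threshold 11/15 comes from: 5 s \<nu> < 5 (3 s - 2) \<le> 1.\<close>
lemma variance_exponent_le_bias_exponent:
  fixes s \<nu> :: real
  assumes s: "0 < s" "s \<le> 11/15" and \<nu>: "\<nu> < 3 - 2 / s"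
  shows "s * \<nu> - 1 \<le> - 4 * s * \<nu>"
proof -
  have "s * \<nu> < s * (3 - 2 / s)" using mult_strict_left_mono[OF \<nu> s(1)] .
  also have "\<dots> = 3 * s - 2" using s(1) by (simp add: right_diff_distrib)
  finally have "s * \<nu> < 3 * s - 2" .
  moreover have "- 4 * s * \<nu> = - 4 * (s * \<nu>)" by simp
  ultimately show ?thesis using s(2) by linarith
qed

lemma bigo_of_two_term_bound:
  fixes f g h q :: "nat \<Rightarrow> real"
  assumes f: "\<And>k. 0 \<le> f k" "\<And>k. f k \<le> a * g k + b * h k" and ab: "0 \<le> a" "0 \<le> b"
    and gh: "\<And>k. g k \<le> c * q k" "\<And>k. h k \<le> d * q k" and q: "\<And>k. 0 \<le> q k"
  shows "f \<in> O(q)"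
proof (intro bigoI[where c = "a * c + b * d"] always_eventually allI)
  fix k
  have "f k \<le> a * (c * q k) + b * (d * q k)"
    using f(2)[of k] mult_left_mono[OF gh(1)[of k] ab(1)] mult_left_mono[OF gh(2)[of k] ab(2)]
    by linarith
  then show "norm (f k) \<le> (a * c + b * d) * norm (q k)"
    using f(1)[of k] q[of k] by (simp add: algebra_simps)
qed

theorem corollary2:
  fixes mreg sig fX K fe Fe :: "real \<Rightarrow> real" and Ix :: "real set"
    and mb :: "nat \<Rightarrow> nat" and nb :: "nat \<Rightarrow> nat \<Rightarrow> nat" and J :: nat
    and dtau delta_tau alpha s Mb Mw lmin lmax deltaK sK :: real
    and nu tbar :: "nat \<Rightarrow> real"
  defines "n \<equiv> \<lambda>k. \<Sum>i = 1..mb k. nb k i"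
    and "Finv \<equiv> qinv Fe"
    and "tau \<equiv> \<lambda>k. tau_lev (mb k) J dtau (tbar k)"
    and "h \<equiv> \<lambda>k. bw alpha (nu k) (nb k)"
    and "w \<equiv> \<lambda>k. opt_weights fe (qinv Fe) (mb k) J (nb k) (bw alpha (nu k) (nb k))
                      (tau_lev (mb k) J dtau (tbar k))"
  assumes
    \<comment> \<open>(A1) and the model ingredients\<close>
    A1_open: "open Ix" and A1_sub: "Ix \<subseteq> {0..1}"
    and A1_pos: "\<forall>y\<in>Ix. fX y > 0 \<and> sig y > 0"
    and A1_fX: "C2_on Ix fX" and A1_m: "C2_on Ix mreg" and A1_sig: "C2_on Ix sig"
    and fX_dens: "\<forall>y. fX y \<ge> 0" "\<forall>y. y \<notin> {0..1} \<longrightarrow> fX y = 0"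
      "integrable lborel fX" "(LINT y|lborel. fX y) = 1"
    and A1_fe_pos: "\<forall>t. fe t > 0"
    and A1_fe_deriv: "\<forall>t. fe differentiable (at t)"
      "continuous_on UNIV (deriv fe)" "bounded (range (deriv fe))"
    and eps_cdf: "\<forall>t. Fe t = (LINT u:{..t}|lborel. fe u)"
    and eps_dens: "integrable lborel fe" "(LINT u|lborel. fe u) = 1"
    and eps_mom: "integrable lborel (\<lambda>u. u\<^sup>2 * fe u)"
      "(LINT u|lborel. u * fe u) = 0" "(LINT u|lborel. u\<^sup>2 * fe u) = 1"
    \<comment> \<open>(A2)\<close>
    and A2_lip: "\<exists>L. \<forall>u v. \<bar>K u - K v\<bar> \<le> L * \<bar>u - v\<bar>"
    and A2_nonneg: "\<forall>u. K u \<ge> 0"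
    and A2_supp: "\<exists>R. \<forall>u. R < \<bar>u\<bar> \<longrightarrow> K u = 0"
    and A2_int: "integrable lborel K" "(LINT u|lborel. K u) = 1"
      "(LINT u|lborel. u * K u) = 0"
      "integrable lborel (\<lambda>u. u\<^sup>2 * K u)" "integrable lborel (\<lambda>u. (K u)\<^sup>2)"
    and A2_low: "deltaK > 0" "sK > 0" "\<forall>u\<in>{-sK..sK}. K u \<ge> deltaK"
    \<comment> \<open>design\<close>
    and J_pos: "J \<ge> 1" and mb_pos: "\<forall>k. mb k \<ge> 1"
    and n_lim: "filterlim (\<lambda>k. real (n k)) at_top sequentially"
    and alpha_pos: "alpha > 0" and dtau_pos: "dtau > 0"
    and tbar_range: "\<forall>k. delta_tau \<le> tbar k - dtau / 2 \<and> tbar k + dtau / 2 \<le> 1 - delta_tau"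
    and tbar_choice:
      "(\<forall>k. (\<Sum>p < mb k * J. Fvec Finv (mb k) J (tau k) $ p) = 0)
       \<or> (\<forall>k. scalar_prod (ones (mb k * J))
                (Sinv fe Finv (mb k) J (nb k) (bw 1 (nu k) (nb k)) (tau k)
                  *\<^sub>v Fvec Finv (mb k) J (tau k)) = 0)"
    \<comment> \<open>(A3)\<close>
    and A3_consts: "Mw > 0" "0 < delta_tau" "delta_tau < 1/2" "0 < lmin" "lmin < lmax"
    and A3_sum1: "\<forall>k. (\<Sum>p < mb k * J. w k $ p) = 1"
    and A3_sumF: "\<forall>k. (\<Sum>p < mb k * J. w k $ p * Fvec Finv (mb k) J (tau k) $ p) = 0"
    and A3_wbd: "\<forall>k p. p < mb k * J \<longrightarrow> \<bar>w k $ p\<bar> < Mw"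
    and A3_tau: "\<forall>k i j. i \<in> {1..mb k} \<longrightarrow> j \<in> {1..J} \<longrightarrow>
                   delta_tau < tau k i j \<and> tau k i j < 1 - delta_tau"
    and A3_eig: "\<forall>k i e. i \<in> {1..mb k} \<longrightarrow> eigenvalue (R1mat fe Finv J (tau k) i) e \<longrightarrow>
                   lmin < e \<and> e < lmax"
    \<comment> \<open>(A4)\<close>
    and A4_consts: "Mb > 0" "2/3 < s" "s \<le> 1"
    and A4_sizes: "\<forall>k i. i \<in> {1..mb k} \<longrightarrow>
                     Mb powr (-2) * real (n k) powr s < real (nb k i)
                     \<and> real (nb k i) < Mb\<^sup>2 * real (n k) powr s"
    and A4_nu: "\<forall>k. 0 < nu k \<and> nu k < 3 - 2 / s"
  shows
    "(\<forall>nu0. (\<forall>k. nu k = nu0) \<longrightarrow>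
        (\<forall>x\<in>{0..1}.
           (11/15 \<le> s \<longrightarrow>
              (\<lambda>k. amse K mreg sig fX fe Finv x (mb k) J (nb k) (h k) (tau k) (w k))
                \<in> O(\<lambda>k. real (n k) powr (-4 * s * nu0) + real (n k) powr (s * nu0 - 1)))
         \<and> (s \<le> 11/15 \<longrightarrow>
              (\<lambda>k. amse K mreg sig fX fe Finv x (mb k) J (nb k) (h k) (tau k) (w k))
                \<in> O(\<lambda>k. real (n k) powr (-4 * s * nu0)))))
     \<and> ((11/15 \<le> s \<and> (\<forall>k. nu k = ln (real (n k)) / (5 * (ln (real (n k)) - ln (real (mb k)))))) \<longrightarrow>
        (\<forall>x\<in>{0..1}.
           (\<lambda>k. amse K mreg sig fX fe Finv x (mb k) J (nb k) (h k) (tau k) (w k))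
             \<in> O(\<lambda>k. real (n k) powr (-4/5))))"
proof -
  have "continuous_on UNIV fe"
    using A1_fe_deriv(1) by (simp add: continuous_at_imp_continuous_on differentiable_imp_continuous_within)
  then obtain CF where CF: "\<forall>\<tau>. delta_tau < \<tau> \<and> \<tau> < 1 - delta_tau \<longrightarrow> \<bar>Finv \<tau>\<bar> \<le> CF"
    using qinv_bounded[OF eps_cdf eps_dens A1_fe_pos _ eps_mom(1,3) A3_consts(2)]
    unfolding Finv_def by blast
  define Bm where "Bm x = \<bar>mu2 K\<bar> / 2 * (\<bar>deriv (deriv mreg) x\<bar> + \<bar>deriv (deriv sig) x\<bar> * CF)" for x
  define K1 where "K1 x = (Bm x)\<^sup>2 * lmax / lmin * alpha ^ 4 * Mb ^ 8" for x
  define K2 where "K2 x = avar K sig fX x * lmax * Mb ^ 4 / alpha" for x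
  let ?amse = "\<lambda>x k. amse K mreg sig fX fe Finv x (mb k) J (nb k) (h k) (tau k) (w k)"
  have \<nu>: "0 < nu k" "nu k < 1" for k
    using A4_nu A4_consts by (auto simp: le_divide_eq intro: less_le_trans)
  have n_sum: "n k = (\<Sum>i = 1..mb k. nb k i)" for k unfolding n_def by simp
  have rate: "0 \<le> ?amse x k \<and> ?amse x k
      \<le> K1 x * real (n k) powr (- 4 * s * nu k) + K2 x * real (n k) powr (s * nu k - 1)" for x k
  proof -
    have "\<forall>p<mb k * J. \<bar>beta K mreg sig Finv x (stack (mb k) J (tau k) $ p)\<bar> \<le> Bm x"
    proof (intro stack_all ballI)
      fix i j assume "i \<in> {1..mb k}" "j \<in> {1..J}"
      then have "\<bar>Finv (tau k i j)\<bar> \<le> CF" using A3_tau CF by blast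
      then show "\<bar>beta K mreg sig Finv x (tau k i j)\<bar> \<le> Bm x" unfolding Bm_def by (rule beta_abs_le)
    qed
    moreover have "w k = opt_weights fe Finv (mb k) J (nb k) (bw alpha (nu k) (nb k)) (tau k)"
      unfolding w_def Finv_def tau_def ..
    moreover have "\<forall>i e. i \<in> {1..mb k} \<longrightarrow> eigenvalue (R1mat fe Finv J (tau k) i) e \<longrightarrow> lmin < e \<and> e < lmax"
      using A3_eig by blast
    moreover have "(\<Sum>p < mb k * J. Fvec Finv (mb k) J (tau k) $ p) = 0
       \<or> scalar_prod (ones (mb k * J)) (Sinv fe Finv (mb k) J (nb k) (bw 1 (nu k) (nb k)) (tau k)
           *\<^sub>v Fvec Finv (mb k) J (tau k)) = 0"
      using tbar_choice by blast
    moreover have "\<forall>i\<in>{1..mb k}. Mb powr (-2) * real (n k) powr s < real (nb k i)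
        \<and> real (nb k i) < Mb\<^sup>2 * real (n k) powr s"
      using A4_sizes by blast
    ultimately show ?thesis
      using amse_le_rate[OF J_pos mb_pos[rule_format] alpha_pos A3_consts(4,5) _ _
          A3_sum1[rule_format] A3_sumF[rule_format] _ _ avar_nonneg[OF fX_dens(1)] A4_consts(1) _
          n_sum \<nu>[of k]]
      unfolding h_def K1_def K2_def by blast
  qed
  have K: "0 \<le> K1 x" "0 \<le> K2 x" for x
    unfolding K1_def K2_def using A3_consts alpha_pos avar_nonneg[OF fX_dens(1)] by simp_all
  show ?thesis
  proof (intro conjI allI impI ballI)
    fix nu0 x assume "\<forall>k. nu k = nu0"
    then have rate0: "0 \<le> ?amse x k \<and> ?amse x k
        \<le> K1 x * real (n k) powr (- 4 * s * nu0) + K2 x * real (n k) powr (s * nu0 - 1)" for k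
      using rate by metis
    show "?amse x \<in> O(\<lambda>k. real (n k) powr (-4 * s * nu0) + real (n k) powr (s * nu0 - 1))"
      using rate0 K by (intro bigo_of_two_term_bound[where c = 1 and d = 1]) auto
    assume "s \<le> 11/15"
    moreover have "nu0 < 3 - 2 / s" using A4_nu \<open>\<forall>k. nu k = nu0\<close> by metis
    ultimately have "s * nu0 - 1 \<le> -4 * s * nu0"
      using A4_consts by (intro variance_exponent_le_bias_exponent) auto
    moreover have "0 < n k" for k
      using batch_size_log_bounds(1)[OF mb_pos[rule_format] A4_consts(1) _ n_sum] A4_sizes by blast
    ultimately have "real (n k) powr (s * nu0 - 1) \<le> 1 * real (n k) powr (-4 * s * nu0)" for k
      by (simp add: Suc_le_eq powr_mono)
    then show "?amse x \<in> O(\<lambda>k. real (n k) powr (-4 * s * nu0))"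
      using rate0 K by (intro bigo_of_two_term_bound[where c = 1 and d = 1]) auto
  next
    fix x assume "11/15 \<le> s \<and> (\<forall>k. nu k = ln (real (n k)) / (5 * (ln (real (n k)) - ln (real (mb k)))))"
    then have "real (n k) powr (- 4 * s * nu k) \<le> Mb ^ 8 * real (n k) powr (- 4 / 5)"
      "real (n k) powr (s * nu k - 1) \<le> Mb\<^sup>2 * real (n k) powr (- 4 / 5)" for k
      using optimal_nu_rates[OF mb_pos[rule_format] A4_consts(1) _ n_sum _ \<nu>] A4_sizes by blast+
    then show "?amse x \<in> O(\<lambda>k. real (n k) powr (-4/5))"
      using rate K by (intro bigo_of_two_term_bound) auto
  qed
qed

end
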